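(* Let $n\ge3$, $n\ne 4$, and let $\mathcal M$ be a map of class $2_{\{0,1\}}$ whose underlying graph is the Rose Window graph $R_n(2,1)$. Then $\mathcal M$ has faces of two different lengths.
   Context: For $n\ge3$, $1\le r\le n-1$ with $r\ne n/2$, and $0\le a\le n-1$, the Rose Window graph $R_n(a,r)$ has vertex set $\{x_i,y_i: i\in\mathbb Z_n\}$ and edges $x_ix_{i+1}$, $y_iy_{i+r}$, $x_iy_i$, $x_iy_{i-a}$ for $i\in\mathbb Z_n$ (indices mod $n$). A map is a $2$-cell embedding of a connected simple graph (its underlying graph) in a closed surface; the components of the complement are the faces, and the length of a face is the length of its boundary walk. All maps considered are polytopal: flags correspond bijectively to incident triples (vertex, edge, face). For a flag $\Phi$ and $i\in\{0,1,2\}$, $\Phi^i$ is the unique flag differing from $\Phi$ exactly in its vertex ($i=0$), edge ($i=1$) or face ($i=2$). $\mathrm{Aut}(\mathcal M)$ is the group of automorphisms of the underlying graph preserving the set of faces. A map is in class $2_{\{0,1\}}$ if $\mathrm{Aut}(\mathcal M)$ has exactly two orbits on flags and for every flag $\Phi$, the flags $\Phi^0,\Phi^1$ lie in the orbit of $\Phi$ while $\Phi^2$ does not. *)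

theory Defs
  imports Main
begin

text \<open>Rose Window graph R_n(a,r). Vertex x_i is (False, i), vertex y_i is (True, i), 0 <= i < n.
  Edges are two-element vertex sets.\<close>

definition rose_V :: "nat \<Rightarrow> (bool \<times> nat) set" where
  "rose_V n = {(b, i). i < n}"

definition rose_E :: "nat \<Rightarrow> nat \<Rightarrow> nat \<Rightarrow> (bool \<times> nat) set set" where
  "rose_E n a r = (\<Union>i\<in>{..<n}.
      { {(False, i), (False, (i + 1) mod n)},
        {(True, i), (True, (i + r) mod n)},
        {(False, i), (True, i)},
        {(False, i), (True, (i + n - a) mod n)} })"

definition is_cycle_edges :: "'v set set \<Rightarrow> bool" where
  "is_cycle_edges f \<longleftrightarrow> (\<exists>vs. distinct vs \<and> length vs \<ge> 3 \<and>
      f = {{vs ! i, vs ! ((i + 1) mod length vs)} | i. i < length vs})"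

definition simple_graph :: "'v set \<Rightarrow> 'v set set \<Rightarrow> bool" where
  "simple_graph V E \<longleftrightarrow> finite V \<and> (\<forall>e\<in>E. \<exists>u v. u \<in> V \<and> v \<in> V \<and> u \<noteq> v \<and> e = {u, v})"

definition graph_connected :: "'v set \<Rightarrow> 'v set set \<Rightarrow> bool" where
  "graph_connected V E \<longleftrightarrow> (\<forall>u\<in>V. \<forall>v\<in>V. (u, v) \<in> {(x, y). {x, y} \<in> E}\<^sup>*)"

text \<open>Polytopal map with underlying graph (V,E), given combinatorially by its set F of faces,
  each face being represented by the edge set of its boundary cycle. Conditions:
  every face boundary is a cycle of the graph; every edge lies on exactly two faces; and
  the faces around every vertex form a single rotation (the vertex link is connected),
  so that gluing discs along the face boundaries yields a closed surface.\<close>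

definition polytopal_map :: "'v set \<Rightarrow> 'v set set \<Rightarrow> 'v set set set \<Rightarrow> bool" where
  "polytopal_map V E F \<longleftrightarrow>
     simple_graph V E \<and> graph_connected V E \<and>
     (\<forall>f\<in>F. f \<subseteq> E \<and> is_cycle_edges f) \<and>
     (\<forall>e\<in>E. card {f\<in>F. e \<in> f} = 2) \<and>
     (\<forall>v\<in>V. \<forall>e\<in>E. \<forall>e'\<in>E. v \<in> e \<and> v \<in> e' \<longrightarrow>
        (e, e') \<in> {(d, d'). v \<in> d \<and> v \<in> d' \<and> (\<exists>f\<in>F. d \<in> f \<and> d' \<in> f)}\<^sup>*)"

definition flags :: "'v set set set \<Rightarrow> ('v \<times> 'v set \<times> 'v set set) set" where
  "flags F = {(v, e, f). f \<in> F \<and> e \<in> f \<and> v \<in> e}"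

definition map_aut :: "'v set \<Rightarrow> 'v set set \<Rightarrow> 'v set set set \<Rightarrow> ('v \<Rightarrow> 'v) \<Rightarrow> bool" where
  "map_aut V E F \<sigma> \<longleftrightarrow> bij_betw \<sigma> V V \<and>
     (\<forall>u\<in>V. \<forall>v\<in>V. {u, v} \<in> E \<longleftrightarrow> {\<sigma> u, \<sigma> v} \<in> E) \<and>
     (\<lambda>f. (\<lambda>e. \<sigma> ` e) ` f) ` F = F"

definition flag_act :: "('v \<Rightarrow> 'v) \<Rightarrow> 'v \<times> 'v set \<times> 'v set set \<Rightarrow> 'v \<times> 'v set \<times> 'v set set" where
  "flag_act \<sigma> \<Phi> = (case \<Phi> of (v, e, f) \<Rightarrow> (\<sigma> v, \<sigma> ` e, (\<lambda>d. \<sigma> ` d) ` f))"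

definition flag_orbit :: "'v set \<Rightarrow> 'v set set \<Rightarrow> 'v set set set \<Rightarrow> 'v \<times> 'v set \<times> 'v set set
    \<Rightarrow> ('v \<times> 'v set \<times> 'v set set) set" where
  "flag_orbit V E F \<Phi> = {flag_act \<sigma> \<Phi> | \<sigma>. map_aut V E F \<sigma>}"

text \<open>Class 2_{0,1}: exactly two flag orbits; the 0- and 1-adjacent flags of any flag lie in
  its orbit, the 2-adjacent flag does not. The i-adjacent flag is the flag differing exactly in
  the vertex / edge / face component.\<close>

definition class_2_01 :: "'v set \<Rightarrow> 'v set set \<Rightarrow> 'v set set set \<Rightarrow> bool" where
  "class_2_01 V E F \<longleftrightarrow>
     card (flag_orbit V E F ` flags F) = 2 \<and>
     (\<forall>v e f. (v, e, f) \<in> flags F \<longrightarrow>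
        (\<forall>v'. (v', e, f) \<in> flags F \<and> v' \<noteq> v \<longrightarrow> (v', e, f) \<in> flag_orbit V E F (v, e, f)) \<and>
        (\<forall>e'. (v, e', f) \<in> flags F \<and> e' \<noteq> e \<longrightarrow> (v, e', f) \<in> flag_orbit V E F (v, e, f)) \<and>
        (\<forall>f'. (v, e, f') \<in> flags F \<and> f' \<noteq> f \<longrightarrow> (v, e, f') \<notin> flag_orbit V E F (v, e, f)))"

end

theory Submission
  imports Defs
begin

text \<open>
  In \<open>R\<^sub>n(2,1)\<close> the vertices \<open>y\<^sub>i\<close> and \<open>x\<^sub>i\<^sub>+\<^sub>1\<close> have the same neighbours, and for \<open>n \<noteq> 4\<close>
  these pairs (blocks) are exactly the classes of vertices with equal neighbourhoods, so every
  automorphism commutes with the involution \<open>twin\<close> exchanging the two vertices of a block. In a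
  map of class \<open>2\<^sub>{\<^sub>0\<^sub>,\<^sub>1\<^sub>}\<close> the two flag orbits colour the faces so that the two faces at an
  edge differ in colour, the automorphisms act transitively on the flags of each colour, and
  every edge of a face is reversed by an automorphism fixing that face.

  If some face has a corner \<open>v a\<close>, \<open>v (twin a)\<close>, these reflections make it the 4-cycle
  \<open>v a (twin v) (twin a)\<close>, whereas the other face at \<open>v a\<close> contains a path \<open>b v a (\<sigma> b)\<close>
  climbing three blocks and therefore is not a 4-cycle.

  Otherwise every face climbs monotonically through the blocks and has length at least \<open>n\<close>.
  Starting a face walk at twin vertices, or switching colour, changes the walk only by twins,
  following a Boolean recurrence governed by one global bit \<open>twist\<close>. If both colours had the
  same face length, this recurrence evaluated after \<open>n\<close> steps would force \<open>n\<close> to be a multiple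
  of 3 or 4; but then exchanging twins in a periodic pattern of blocks is an automorphism that
  fixes an edge and exchanges the two faces at it, which class \<open>2\<^sub>{\<^sub>0\<^sub>,\<^sub>1\<^sub>}\<close> forbids.
\<close>

section \<open>Cycles\<close>

lemma is_cycle_edgesE:
  assumes "is_cycle_edges f"
  obtains vs where "distinct vs" "length vs \<ge> 3"
    "f = {{vs ! i, vs ! ((i + 1) mod length vs)} | i. i < length vs}"
  using assms unfolding is_cycle_edges_def by blast

lemma is_cycle_edges_of_list:
  assumes "distinct vs" "length vs \<ge> 3"
  shows "is_cycle_edges ((\<lambda>i. {vs ! i, vs ! ((i + 1) mod length vs)}) ` {..<length vs})"
  unfolding is_cycle_edges_def using assms by (intro exI[of _ vs]) auto

lemma is_cycle_edges_triangle:
  assumes "distinct [x0, x1, x2]"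
  shows "is_cycle_edges {{x0, x1}, {x1, x2}, {x2, x0}}"
proof -
  have "{..<length [x0, x1, x2]} = {0, 1, 2}" by auto
  then show ?thesis
    using is_cycle_edges_of_list[OF assms] by (simp add: insert_commute)
qed

lemma is_cycle_edges_square:
  assumes "distinct [x0, x1, x2, x3]"
  shows "is_cycle_edges {{x0, x1}, {x1, x2}, {x2, x3}, {x3, x0}}"
proof -
  have "{..<length [x0, x1, x2, x3]} = {0, 1, 2, 3}" by auto
  then show ?thesis
    using is_cycle_edges_of_list[OF assms] by (simp add: insert_commute)
qed

lemma cycle_edge_doubleton:
  assumes "is_cycle_edges f" "e \<in> f"
  obtains x y where "x \<noteq> y" "e = {x, y}"
proof -
  obtain vs where vs: "distinct vs" "length vs \<ge> 3"
    and f: "f = {{vs ! i, vs ! ((i + 1) mod length vs)} | i. i < length vs}"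
    using assms(1) by (rule is_cycle_edgesE)
  obtain i where i: "i < length vs" "e = {vs ! i, vs ! ((i + 1) mod length vs)}" using assms(2) f
    by blast
  have "i + 1 < length vs \<or> i + 1 = length vs" using i by linarith
  then have "(i + 1) mod length vs \<noteq> i" "(i + 1) mod length vs < length vs" using vs(2) by auto
  then have "vs ! i \<noteq> vs ! ((i + 1) mod length vs)" using vs(1) i(1)
    by (simp add: nth_eq_iff_index_eq)
  then show ?thesis using that i(2) by blast
qed

lemma cycle_nonempty: "is_cycle_edges f \<Longrightarrow> f \<noteq> {}"
  by (elim is_cycle_edgesE) (auto intro!: exI[of _ 0])

lemma cycle_finite: "is_cycle_edges f \<Longrightarrow> finite f"
  by (elim is_cycle_edgesE) auto

lemma Suc_mod_inj:
  fixes i j L :: nat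
  assumes "i < L" "j < L" "(i + 1) mod L = (j + 1) mod L"
  shows "i = j"
  using assms by (metis add_right_cancel mod_less le_neq_implies_less Suc_eq_plus1 Suc_leI mod_self
      nat.distinct(1))

lemma cycle_edges_at_nth:
  assumes vs: "distinct vs" "j < length vs" "p < length vs" "(p + 1) mod length vs = j"
    and f: "f = {{vs ! i, vs ! ((i + 1) mod length vs)} | i. i < length vs}"
  shows "{e \<in> f. vs ! j \<in> e} = {{vs ! j, vs ! ((j + 1) mod length vs)}, {vs ! p, vs ! j}}"
proof -
  define L where "L = length vs"
  have nth_eq: "vs ! a = vs ! b \<longleftrightarrow> a = b" if "a < L" "b < L" for a b
    using that vs(1) L_def by (simp add: nth_eq_iff_index_eq)
  have edge_in: "{vs ! i, vs ! ((i + 1) mod L)} \<in> f" if "i < L" for i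
    using that f L_def by blast
  have "e \<in> f \<and> vs ! j \<in> e \<longleftrightarrow> e = {vs ! j, vs ! ((j + 1) mod L)} \<or> e = {vs ! p, vs ! j}" for e
  proof
    assume e: "e \<in> f \<and> vs ! j \<in> e"
    then obtain i where i: "i < L" "e = {vs ! i, vs ! ((i + 1) mod L)}" using f L_def by blast
    have "vs ! j = vs ! i \<or> vs ! j = vs ! ((i + 1) mod L)" using e i by auto
    moreover have "(i + 1) mod L < L" using i(1) by simp
    ultimately have "i = j \<or> (i + 1) mod L = j"
      using nth_eq[of j i] nth_eq[of j "(i + 1) mod L"] vs(2) i(1) L_def by blast
    then show "e = {vs ! j, vs ! ((j + 1) mod L)} \<or> e = {vs ! p, vs ! j}"
      using i Suc_mod_inj[OF i(1), of p] vs(3,4) L_def by (auto simp: insert_commute)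
  next
    assume "e = {vs ! j, vs ! ((j + 1) mod L)} \<or> e = {vs ! p, vs ! j}"
    then show "e \<in> f \<and> vs ! j \<in> e"
      using edge_in[of j] edge_in[of p] vs L_def by (auto simp: insert_commute)
  qed
  then show ?thesis unfolding L_def by (simp add: set_eq_iff)
qed

lemma card_cycle_edges_at:
  assumes "is_cycle_edges f" "x \<in> \<Union> f"
  shows "card {e \<in> f. x \<in> e} = 2"
proof -
  obtain vs where vs: "distinct vs" "length vs \<ge> 3"
    and f: "f = {{vs ! i, vs ! ((i + 1) mod length vs)} | i. i < length vs}"
    using assms(1) by (rule is_cycle_edgesE)
  define L where "L = length vs"
  have L: "L \<ge> 3" using vs L_def by simp
  obtain j where j: "j < L" "x = vs ! j"
  proof -
    obtain i where "i < L" "x \<in> {vs ! i, vs ! ((i + 1) mod L)}" using assms(2) f L_def by blast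
    moreover have "(i + 1) mod L < L" using L by simp
    ultimately show ?thesis using that by blast
  qed
  define p where "p = (if j = 0 then L - 1 else j - 1)"
  define q where "q = (j + 1) mod L"
  have "j + 1 < L \<or> j + 1 = L" using j by linarith
  then have pq: "p < L" "q < L" "(p + 1) mod L = j" "p \<noteq> j" "q \<noteq> j" "p \<noteq> q"
    using L j unfolding p_def q_def by (cases "j = 0"; auto)+
  then have "vs ! q \<noteq> vs ! p" "vs ! q \<noteq> vs ! j"
    using vs(1) j(1) L_def by (simp_all add: nth_eq_iff_index_eq)
  then have "{vs ! j, vs ! q} \<noteq> {vs ! p, vs ! j}" by (auto simp: doubleton_eq_iff)
  then show ?thesis
    using cycle_edges_at_nth[OF vs(1) _ _ _ f, of j p] j pq unfolding q_def L_def by simp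
qed

lemma cycle_edges_at_vertex:
  assumes "is_cycle_edges f" "e1 \<in> f" "e2 \<in> f" "e3 \<in> f" "x \<in> e1" "x \<in> e2" "x \<in> e3"
  shows "e1 = e2 \<or> e1 = e3 \<or> e2 = e3"
proof (rule ccontr)
  assume "\<not> ?thesis"
  then have "card {e1, e2, e3} = 3" by auto
  moreover have "{e1, e2, e3} \<subseteq> {e \<in> f. x \<in> e}" using assms by auto
  then have "card {e1, e2, e3} \<le> card {e \<in> f. x \<in> e}"
    using cycle_finite[OF assms(1)] by (intro card_mono) auto
  moreover have "x \<in> \<Union> f" using assms(2,5) by blast
  ultimately show False using card_cycle_edges_at[OF assms(1)] by simp
qed

lemma cycle_edge_at_vertex_cases:
  assumes "is_cycle_edges f" "e1 \<in> f" "e2 \<in> f" "e1 \<noteq> e2" "x \<in> e1" "x \<in> e2" "e \<in> f" "x \<in> e"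
  shows "e = e1 \<or> e = e2"
  using cycle_edges_at_vertex[OF assms(1,2,3,7,5,6,8)] assms(4) by blast

lemma cycle_two_edges_at_vertex:
  assumes "is_cycle_edges f" "x \<in> \<Union> f"
  obtains e1 e2 where "e1 \<in> f" "e2 \<in> f" "e1 \<noteq> e2" "x \<in> e1" "x \<in> e2"
  using card_cycle_edges_at[OF assms] by (auto simp: card_2_iff)

lemma cycle_ex1_other_neighbour:
  assumes "is_cycle_edges f" "{w, u} \<in> f"
  shows "\<exists>!z. z \<noteq> u \<and> {w, z} \<in> f"
proof (rule ex_ex1I)
  have "w \<in> \<Union> f" using assms(2) by blast
  then obtain d where d: "d \<in> f" "w \<in> d" "d \<noteq> {w, u}"
    by (rule cycle_two_edges_at_vertex[OF assms(1)]) metis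
  obtain x y where "x \<noteq> y" "d = {x, y}" using cycle_edge_doubleton[OF assms(1) d(1)] by blast
  then have "d = {w, if w = x then y else x}" using d(2) by auto
  then show "\<exists>z. z \<noteq> u \<and> {w, z} \<in> f" using d by metis
next
  fix z z' assume z: "z \<noteq> u \<and> {w, z} \<in> f" and z': "z' \<noteq> u \<and> {w, z'} \<in> f"
  then have "{w, z} = {w, u} \<or> {w, z} = {w, z'} \<or> {w, u} = {w, z'}"
    using cycle_edges_at_vertex[OF assms(1), of "{w, z}" "{w, u}" "{w, z'}" w] assms(2) by blast
  then show "z = z'" using z z' by (auto simp: doubleton_eq_iff)
qed

lemma cycle_vertices_closed:
  assumes "is_cycle_edges f" "x0 \<in> S" "x0 \<in> \<Union> f"
    and closed: "\<And>e x. e \<in> f \<Longrightarrow> x \<in> e \<Longrightarrow> x \<in> S \<Longrightarrow> e \<subseteq> S"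
  shows "\<Union> f \<subseteq> S"
proof -
  obtain vs where vs: "distinct vs" "length vs \<ge> 3"
    and f: "f = {{vs ! i, vs ! ((i + 1) mod length vs)} | i. i < length vs}"
    using assms(1) by (rule is_cycle_edgesE)
  define L where "L = length vs"
  have L: "L \<ge> 3" using vs L_def by simp
  have edge_in: "{vs ! i, vs ! ((i + 1) mod L)} \<in> f" if "i < L" for i
    using that f L_def by blast
  obtain m where m: "m < L" "vs ! m \<in> S"
  proof -
    obtain j where j: "j < L" "x0 \<in> {vs ! j, vs ! ((j + 1) mod L)}" using assms(3) f L_def by blast
    moreover have "(j + 1) mod L < L" using L by simp
    ultimately show ?thesis using that assms(2) by blast
  qed
  have walk: "vs ! ((m + k) mod L) \<in> S" for k
  proof (induction k)
    case 0 then show ?case using m by simp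
  next
    case (Suc k)
    have "(m + k) mod L < L" using L by simp
    then have "vs ! (((m + k) mod L + 1) mod L) \<in> S" using closed[OF edge_in] Suc by blast
    then show ?case by (simp add: mod_Suc_eq)
  qed
  have all: "vs ! i \<in> S" if "i < L" for i
    using walk[of "i + L - m"] that m(1) by simp
  show ?thesis
  proof
    fix x assume "x \<in> \<Union> f"
    then obtain i where "i < L" "x \<in> {vs ! i, vs ! ((i + 1) mod L)}" using f L_def by blast
    moreover have "(i + 1) mod L < L" using L by simp
    ultimately show "x \<in> S" using all by auto
  qed
qed

lemma cycle_vertices_set:
  assumes "length vs \<ge> 3" "f = {{vs ! i, vs ! ((i + 1) mod length vs)} | i. i < length vs}"
  shows "\<Union> f = set vs"
proof
  show "\<Union> f \<subseteq> set vs"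
  proof
    fix x assume "x \<in> \<Union> f"
    then obtain i where "i < length vs" "x \<in> {vs ! i, vs ! ((i + 1) mod length vs)}" using assms(2)
      by blast
    moreover have "(i + 1) mod length vs < length vs" using assms(1)
      by (intro mod_less_divisor) linarith
    ultimately show "x \<in> set vs" by auto
  qed
  show "set vs \<subseteq> \<Union> f"
  proof
    fix x assume "x \<in> set vs"
    then obtain i where "i < length vs" "x = vs ! i" by (auto simp: in_set_conv_nth)
    then show "x \<in> \<Union> f" using assms(2) by auto
  qed
qed

lemma card_cycle_vertices:
  assumes "is_cycle_edges f"
  shows "card f = card (\<Union> f)"
proof -
  obtain vs where vs: "distinct vs" "length vs \<ge> 3"
    and f: "f = {{vs ! i, vs ! ((i + 1) mod length vs)} | i. i < length vs}"
    using assms by (rule is_cycle_edgesE)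
  define L where "L = length vs"
  have L: "L \<ge> 3" using vs L_def by simp
  define h where "h i = {vs ! i, vs ! ((i + 1) mod L)}" for i
  have fh: "f = h ` {..<L}" using f unfolding h_def L_def by auto
  have nth_eq: "vs ! a = vs ! b \<longleftrightarrow> a = b" if "a < L" "b < L" for a b
    using that vs(1) L_def by (simp add: nth_eq_iff_index_eq)
  have "inj_on h {..<L}"
  proof
    fix i j assume ij: "i \<in> {..<L}" "j \<in> {..<L}" "h i = h j"
    have lt: "i < L" "j < L" "(i + 1) mod L < L" "(j + 1) mod L < L" using ij L by auto
    show "i = j"
    proof (rule ccontr)
      assume "i \<noteq> j"
      then have "vs ! i = vs ! ((j + 1) mod L) \<and> vs ! ((i + 1) mod L) = vs ! j"
        using ij(3) nth_eq lt unfolding h_def doubleton_eq_iff by auto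
      then have i_eq: "i = (j + 1) mod L" and j_eq: "j = (i + 1) mod L" using nth_eq lt by auto
      have "(j + 2) mod L = ((j + 1) mod L + 1) mod L" by (simp add: mod_Suc_eq)
      also have "\<dots> = j" unfolding i_eq[symmetric] j_eq[symmetric] ..
      finally have "(j + 2) mod L = j" .
      moreover have "j + 2 < L \<or> (j + 2 \<ge> L \<and> j + 2 < 2 * L)" using lt L by linarith
      ultimately show False using L by (auto simp: le_mod_geq)
    qed
  qed
  then have "card f = L" using fh by (simp add: card_image)
  then show ?thesis using cycle_vertices_set[OF vs(2) f] vs(1) L_def by (simp add: distinct_card)
qed

lemma cycle_subset_eq:
  assumes "is_cycle_edges f" "is_cycle_edges g" "g \<subseteq> f"
  shows "g = f"
proof -
  have edge_in_g: "e \<in> g" if e: "e \<in> f" "x \<in> e" "x \<in> \<Union> g" for e x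
  proof -
    obtain d1 d2 where d: "d1 \<in> g" "d2 \<in> g" "d1 \<noteq> d2" "x \<in> d1" "x \<in> d2"
      using cycle_two_edges_at_vertex[OF assms(2) e(3)] by blast
    then have "e = d1 \<or> e = d2"
      using cycle_edges_at_vertex[OF assms(1), of d1 d2 e x] assms(3) e by blast
    then show ?thesis using d by blast
  qed
  obtain e0 where e0: "e0 \<in> g" using cycle_nonempty[OF assms(2)] by blast
  obtain x0 y0 where x0: "e0 = {x0, y0}" using cycle_edge_doubleton[OF assms(2) e0] by blast
  have "\<Union> f \<subseteq> \<Union> g"
    by (rule cycle_vertices_closed[OF assms(1), of x0]) (use e0 x0 assms(3) edge_in_g in blast)+
  moreover have "f \<subseteq> g"
  proof
    fix e assume e: "e \<in> f"
    then obtain x y where "e = {x, y}" using cycle_edge_doubleton[OF assms(1)] by blast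
    then show "e \<in> g" using e edge_in_g \<open>\<Union> f \<subseteq> \<Union> g\<close> by blast
  qed
  then show ?thesis using assms(3) by blast
qed

lemma four_cycle_closes_path:
  assumes f: "is_cycle_edges f" "card f = 4"
    and path: "{x0, x1} \<in> f" "{x1, x2} \<in> f" "{x2, x3} \<in> f" and dist: "distinct [x0, x1, x2, x3]"
  shows "{x3, x0} \<in> f"
proof -
  have "card (\<Union> f) = 4" using card_cycle_vertices[OF f(1)] f(2) by simp
  moreover have "{x0, x1, x2, x3} \<subseteq> \<Union> f" using path by blast
  moreover have "card {x0, x1, x2, x3} = 4" using dist by simp
  ultimately have verts: "\<Union> f = {x0, x1, x2, x3}"
    by (metis card.infinite card_subset_eq zero_neq_numeral)
  have "x0 \<in> \<Union> f" using path by blast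
  then obtain d where d: "d \<in> f" "x0 \<in> d" "d \<noteq> {x0, x1}"
    by (rule cycle_two_edges_at_vertex[OF f(1)]) metis
  obtain q where q: "d = {x0, q}" "q \<noteq> x0"
    using cycle_edge_doubleton[OF f(1) d(1)] d(2) by (metis doubleton_eq_iff insertE singletonD)
  have "q \<in> {x1, x2, x3}" using verts d q by blast
  moreover have "q \<noteq> x1" using d(3) q(1) by blast
  moreover have "q \<noteq> x2"
  proof
    assume "q = x2"
    then have "{x2, x0} \<in> f" using d(1) q(1) by (simp add: insert_commute)
    then show False
      using cycle_edges_at_vertex[OF f(1) path(2,3), of "{x2, x0}" x2] dist
        by (auto simp: doubleton_eq_iff)
  qed
  ultimately show ?thesis using d(1) q(1) by (auto simp: insert_commute)
qed

section \<open>Maps of class \<open>2\<^sub>{\<^sub>0\<^sub>,\<^sub>1\<^sub>}\<close>\<close>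

definition face_image :: "('v \<Rightarrow> 'w) \<Rightarrow> 'v set set \<Rightarrow> 'w set set" where
  "face_image \<sigma> f = (\<lambda>e. \<sigma> ` e) ` f"

lemma face_image_in: "e \<in> f \<Longrightarrow> \<sigma> ` e \<in> face_image \<sigma> f"
  unfolding face_image_def by blast

lemma face_image_comp: "face_image (\<sigma> \<circ> \<tau>) f = face_image \<sigma> (face_image \<tau> f)"
  unfolding face_image_def by (simp add: image_comp)

lemma face_image_cong_id:
  assumes "\<And>x. x \<in> \<Union> f \<Longrightarrow> \<rho> x = x"
  shows "face_image \<rho> f = f"
proof -
  have "\<rho> ` e = e" if "e \<in> f" for e
  proof -
    have "\<rho> x = x" if "x \<in> e" for x using that \<open>e \<in> f\<close> assms by blast
    then show ?thesis by force
  qed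
  then show ?thesis unfolding face_image_def by simp
qed

lemma flag_act_Pair: "flag_act \<sigma> (v, e, f) = (\<sigma> v, \<sigma> ` e, face_image \<sigma> f)"
  unfolding flag_act_def face_image_def by simp

lemma flag_act_comp: "flag_act (\<sigma> \<circ> \<tau>) \<Phi> = flag_act \<sigma> (flag_act \<tau> \<Phi>)"
  unfolding flag_act_def by (cases \<Phi>) (auto simp: image_comp)

locale class_2_01_map =
  fixes V :: "'v set" and E :: "'v set set" and F :: "'v set set set"
  assumes polytopal: "polytopal_map V E F"
    and class_2_01: "class_2_01 V E F"
begin

abbreviation aut :: "('v \<Rightarrow> 'v) \<Rightarrow> bool" where
  "aut \<equiv> map_aut V E F"

abbreviation orbit :: "'v \<times> 'v set \<times> 'v set set \<Rightarrow> ('v \<times> 'v set \<times> 'v set set) set" where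
  "orbit \<equiv> flag_orbit V E F"

lemma finite_V: "finite V"
  using polytopal unfolding polytopal_map_def simple_graph_def by blast

lemma edge_doubleton: "e \<in> E \<Longrightarrow> \<exists>x y. x \<in> V \<and> y \<in> V \<and> x \<noteq> y \<and> e = {x, y}"
  using polytopal unfolding polytopal_map_def simple_graph_def by blast

lemma edge_subset_V: "e \<in> E \<Longrightarrow> e \<subseteq> V"
  using edge_doubleton by blast

lemma connected: "x \<in> V \<Longrightarrow> y \<in> V \<Longrightarrow> (x, y) \<in> {(x, y). {x, y} \<in> E}\<^sup>*"
  using polytopal unfolding polytopal_map_def graph_connected_def by blast

lemma face_subset_E: "f \<in> F \<Longrightarrow> f \<subseteq> E"
  using polytopal unfolding polytopal_map_def by blast

lemma face_cycle: "f \<in> F \<Longrightarrow> is_cycle_edges f"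
  using polytopal unfolding polytopal_map_def by blast

lemma face_vertices_subset_V: "f \<in> F \<Longrightarrow> e \<in> f \<Longrightarrow> e \<subseteq> V"
  using face_subset_E edge_subset_V by blast

lemma vertex_link_connected:
  "v \<in> V \<Longrightarrow> e \<in> E \<Longrightarrow> e' \<in> E \<Longrightarrow> v \<in> e \<Longrightarrow> v \<in> e' \<Longrightarrow>
   (e, e') \<in> {(d, d'). v \<in> d \<and> v \<in> d' \<and> (\<exists>f\<in>F. d \<in> f \<and> d' \<in> f)}\<^sup>*"
  using polytopal unfolding polytopal_map_def by blast

lemma faces_at_edge:
  assumes "e \<in> E"
  obtains f g where "f \<in> F" "g \<in> F" "f \<noteq> g" "e \<in> f" "e \<in> g"
    "\<And>h. h \<in> F \<Longrightarrow> e \<in> h \<Longrightarrow> h = f \<or> h = g"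
proof -
  have "card {f \<in> F. e \<in> f} = 2" using polytopal assms unfolding polytopal_map_def by blast
  then obtain f g where fg: "f \<noteq> g" "{f \<in> F. e \<in> f} = {f, g}" by (auto simp: card_2_iff)
  then have faces: "h \<in> F \<and> e \<in> h \<longleftrightarrow> h = f \<or> h = g" for h
    by (simp add: set_eq_iff)
  show ?thesis by (rule that[of f g]) (use faces fg(1) in auto)
qed

lemma third_face_at_edge:
  assumes "f \<in> F" "g \<in> F" "h \<in> F" "f \<noteq> g" "e \<in> f" "e \<in> g" "e \<in> h"
  shows "h = f \<or> h = g"
proof -
  have "e \<in> E" using face_subset_E assms(1,5) by blast
  then obtain f' g' where "\<And>h. h \<in> F \<Longrightarrow> e \<in> h \<Longrightarrow> h = f' \<or> h = g'"
    using faces_at_edge by metis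
  then have "h = f' \<or> h = g'" "f = f' \<or> f = g'" "g = f' \<or> g = g'" using assms by auto
  then show ?thesis using assms(4) by blast
qed

lemma flags_iff: "(v, e, f) \<in> flags F \<longleftrightarrow> f \<in> F \<and> e \<in> f \<and> v \<in> e"
  unfolding flags_def by simp

lemma card_flag_orbits: "card (orbit ` flags F) = 2"
  using class_2_01 unfolding class_2_01_def by blast

lemma vertex_flip_in_orbit:
  "(v, e, f) \<in> flags F \<Longrightarrow> (v', e, f) \<in> flags F \<Longrightarrow> v' \<noteq> v \<Longrightarrow> (v', e, f) \<in> orbit (v, e, f)"
  using class_2_01 unfolding class_2_01_def by blast

lemma edge_flip_in_orbit:
  "(v, e, f) \<in> flags F \<Longrightarrow> (v, e', f) \<in> flags F \<Longrightarrow> e' \<noteq> e \<Longrightarrow> (v, e', f) \<in> orbit (v, e, f)"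
  using class_2_01 unfolding class_2_01_def by blast

lemma face_flip_not_in_orbit:
  "(v, e, f) \<in> flags F \<Longrightarrow> (v, e, f') \<in> flags F \<Longrightarrow> f' \<noteq> f \<Longrightarrow> (v, e, f') \<notin> orbit (v, e, f)"
  using class_2_01 unfolding class_2_01_def by blast

lemma aut_bij: "aut \<sigma> \<Longrightarrow> bij_betw \<sigma> V V"
  unfolding map_aut_def by blast

lemma aut_edge_iff: "aut \<sigma> \<Longrightarrow> u \<in> V \<Longrightarrow> v \<in> V \<Longrightarrow> {\<sigma> u, \<sigma> v} \<in> E \<longleftrightarrow> {u, v} \<in> E"
  unfolding map_aut_def by blast

lemma aut_faces: "aut \<sigma> \<Longrightarrow> face_image \<sigma> ` F = F"
  unfolding map_aut_def face_image_def by blast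

lemma aut_face: "aut \<sigma> \<Longrightarrow> f \<in> F \<Longrightarrow> face_image \<sigma> f \<in> F"
  using aut_faces by blast

lemma aut_in_V: "aut \<sigma> \<Longrightarrow> x \<in> V \<Longrightarrow> \<sigma> x \<in> V"
  using aut_bij bij_betwE by blast

lemma aut_inj: "aut \<sigma> \<Longrightarrow> x \<in> V \<Longrightarrow> y \<in> V \<Longrightarrow> \<sigma> x = \<sigma> y \<longleftrightarrow> x = y"
  using aut_bij bij_betw_imp_inj_on inj_onD by metis

lemma aut_surj: "aut \<sigma> \<Longrightarrow> y \<in> V \<Longrightarrow> \<exists>x\<in>V. \<sigma> x = y"
  using aut_bij bij_betw_iff_bijections by metis

lemma aut_id: "aut id"
  unfolding map_aut_def by (simp add: image_id[abs_def])

lemma aut_comp: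
  assumes "aut \<sigma>" "aut \<tau>"
  shows "aut (\<sigma> \<circ> \<tau>)"
proof -
  have "bij_betw (\<sigma> \<circ> \<tau>) V V" using aut_bij assms bij_betw_trans by blast
  moreover have "{(\<sigma> \<circ> \<tau>) u, (\<sigma> \<circ> \<tau>) v} \<in> E \<longleftrightarrow> {u, v} \<in> E" if "u \<in> V" "v \<in> V" for u v
    using aut_edge_iff[OF assms(2) that] aut_edge_iff[OF assms(1)] aut_in_V[OF assms(2)] that
      by simp
  moreover have "face_image (\<sigma> \<circ> \<tau>) ` F = F"
    using aut_faces[OF assms(1)] aut_faces[OF assms(2)]
      by (simp add: face_image_comp image_image[symmetric])
  ultimately show ?thesis unfolding map_aut_def face_image_def by blast
qed

lemma aut_inv:
  assumes "aut \<sigma>"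
  obtains \<sigma>' where "aut \<sigma>'" "\<And>x. x \<in> V \<Longrightarrow> \<sigma>' (\<sigma> x) = x"
proof -
  define \<sigma>' where "\<sigma>' = inv_into V \<sigma>"
  have b: "bij_betw \<sigma> V V" using aut_bij assms by blast
  have b': "bij_betw \<sigma>' V V" unfolding \<sigma>'_def using b by (rule bij_betw_inv_into)
  have left: "\<sigma>' (\<sigma> x) = x" if "x \<in> V" for x
    unfolding \<sigma>'_def using b that bij_betw_inv_into_left by metis
  have right: "\<sigma> (\<sigma>' x) = x" if "x \<in> V" for x
    unfolding \<sigma>'_def using b that bij_betw_inv_into_right by metis
  have inv_V: "\<sigma>' x \<in> V" if "x \<in> V" for x using b' that bij_betwE by blast
  have "{\<sigma>' u, \<sigma>' v} \<in> E \<longleftrightarrow> {u, v} \<in> E" if "u \<in> V" "v \<in> V" for u v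
    using aut_edge_iff[OF assms inv_V inv_V] that right by simp
  moreover have "face_image \<sigma>' ` F = F"
  proof -
    have inverse_face: "face_image \<sigma>' (face_image \<sigma> f) = f" if "f \<in> F" for f
    proof -
      have "\<Union> f \<subseteq> V" using face_vertices_subset_V[OF that] by blast
      then have "face_image (\<sigma>' \<circ> \<sigma>) f = f" using left
        by (intro face_image_cong_id) auto
      then show ?thesis by (simp add: face_image_comp)
    qed
    have "face_image \<sigma>' ` F = face_image \<sigma>' ` face_image \<sigma> ` F"
      using aut_faces[OF assms] by simp
    also have "\<dots> = (\<lambda>f. face_image \<sigma>' (face_image \<sigma> f)) ` F"
      by (simp add: image_image)
    also have "\<dots> = F" using inverse_face by simp
    finally show ?thesis .
  qed
  ultimately have "aut \<sigma>'" using b' unfolding map_aut_def face_image_def by blast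
  then show ?thesis using that left by blast
qed

lemma flag_act_flags: "aut \<sigma> \<Longrightarrow> \<Phi> \<in> flags F \<Longrightarrow> flag_act \<sigma> \<Phi> \<in> flags F"
  unfolding flags_def flag_act_def using aut_face unfolding face_image_def by fastforce

lemma flag_act_id_on:
  assumes "\<And>x. x \<in> V \<Longrightarrow> \<rho> x = x" "\<Phi> \<in> flags F"
  shows "flag_act \<rho> \<Phi> = \<Phi>"
proof -
  obtain v e f where \<Phi>: "\<Phi> = (v, e, f)" by (cases \<Phi>)
  have f: "f \<in> F" "e \<in> f" "v \<in> e" using assms(2) \<Phi> flags_iff by auto
  then have "\<Union> f \<subseteq> V" using face_vertices_subset_V by blast
  then have "face_image \<rho> f = f" using assms(1) by (intro face_image_cong_id) auto
  moreover have "\<rho> ` e = e" "\<rho> v = v" using \<open>\<Union> f \<subseteq> V\<close> f assms(1)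
    by force+
  ultimately show ?thesis using \<Phi> by (simp add: flag_act_Pair)
qed

lemma orbit_iff: "\<Psi> \<in> orbit \<Phi> \<longleftrightarrow> (\<exists>\<sigma>. aut \<sigma> \<and> \<Psi> = flag_act \<sigma> \<Phi>)"
  unfolding flag_orbit_def by blast

lemma orbit_refl: "\<Phi> \<in> orbit \<Phi>"
proof -
  have "flag_act id \<Phi> = \<Phi>" unfolding flag_act_def by (cases \<Phi>) auto
  then show ?thesis using aut_id orbit_iff by metis
qed

lemma orbit_trans: "\<Psi> \<in> orbit \<Phi> \<Longrightarrow> X \<in> orbit \<Psi> \<Longrightarrow> X \<in> orbit \<Phi>"
  unfolding orbit_iff using aut_comp flag_act_comp by metis

lemma orbit_sym:
  assumes "\<Phi> \<in> flags F" "\<Psi> \<in> orbit \<Phi>"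
  shows "\<Phi> \<in> orbit \<Psi>"
proof -
  obtain \<sigma> where \<sigma>: "aut \<sigma>" "\<Psi> = flag_act \<sigma> \<Phi>"
    using assms(2) orbit_iff by blast
  obtain \<sigma>' where \<sigma>': "aut \<sigma>'" "\<And>x. x \<in> V \<Longrightarrow> \<sigma>' (\<sigma> x) = x" using aut_inv[OF \<sigma>(1)] by metis
  have "flag_act \<sigma>' \<Psi> = flag_act (\<sigma>' \<circ> \<sigma>) \<Phi>"
    by (simp only: flag_act_comp \<sigma>(2))
  also have "\<dots> = \<Phi>" using flag_act_id_on[OF _ assms(1)] \<sigma>' by simp
  finally show ?thesis using \<sigma>' orbit_iff by metis
qed

lemma orbit_eq: "\<Phi> \<in> flags F \<Longrightarrow> \<Psi> \<in> orbit \<Phi> \<Longrightarrow> orbit \<Psi> = orbit \<Phi>"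
  using orbit_trans orbit_sym by blast

lemma face_flags_same_orbit:
  assumes \<Phi>: "(v, e, f) \<in> flags F" and \<Psi>: "(v', e', f) \<in> flags F"
  shows "orbit (v', e', f) = orbit (v, e, f)"
proof -
  define S where "S = {x. \<forall>d\<in>f. x \<in> d \<longrightarrow> orbit (x, d, f) = orbit (v, e, f)}"
  have f: "f \<in> F" "e \<in> f" "v \<in> e" using \<Phi> flags_iff by auto
  have edge_flip: "orbit (x, d', f) = orbit (x, d, f)"
    if "(x, d, f) \<in> flags F" "d' \<in> f" "x \<in> d'" for x d d'
  proof (cases "d' = d")
    case False
    then have "(x, d', f) \<in> orbit (x, d, f)" using edge_flip_in_orbit that f(1) flags_iff by auto
    then show ?thesis using orbit_eq that(1) by blast
  qed simp
  have "v \<in> S" unfolding S_def using edge_flip[OF \<Phi>] by blast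
  moreover have "d \<subseteq> S" if d: "d \<in> f" "x \<in> d" "x \<in> S" for d x
  proof
    fix y assume y: "y \<in> d"
    have x_flag: "(x, d, f) \<in> flags F" and y_flag: "(y, d, f) \<in> flags F" using d y f flags_iff
      by auto
    have "orbit (y, d, f) = orbit (x, d, f)"
    proof (cases "y = x")
      case False
      then show ?thesis using orbit_eq[OF x_flag] vertex_flip_in_orbit[OF x_flag y_flag] by blast
    qed simp
    also have "\<dots> = orbit (v, e, f)" using d unfolding S_def by blast
    finally show "y \<in> S" unfolding S_def using edge_flip[OF y_flag] by auto
  qed
  ultimately have "\<Union> f \<subseteq> S" using cycle_vertices_closed[OF face_cycle[OF f(1)]] f
    by blast
  then show ?thesis using \<Psi> flags_iff S_def by auto
qed

lemma face_has_flag: "f \<in> F \<Longrightarrow> \<exists>v e. (v, e, f) \<in> flags F"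
  using cycle_nonempty[OF face_cycle] cycle_edge_doubleton[OF face_cycle] flags_iff
  by (metis ex_in_conv insertI1)

definition face_orbit :: "'v set set \<Rightarrow> ('v \<times> 'v set \<times> 'v set set) set" where
  "face_orbit f = orbit (SOME \<Phi>. \<Phi> \<in> flags F \<and> snd (snd \<Phi>) = f)"

lemma face_orbit_flag:
  assumes "(v, e, f) \<in> flags F"
  shows "face_orbit f = orbit (v, e, f)"
proof -
  define \<Phi>\<^sub>0 where "\<Phi>\<^sub>0 = (SOME \<Phi>. \<Phi> \<in> flags F \<and> snd (snd \<Phi>) = f)"
  have "\<exists>\<Phi>. \<Phi> \<in> flags F \<and> snd (snd \<Phi>) = f" using assms by force
  then have "\<Phi>\<^sub>0 \<in> flags F \<and> snd (snd \<Phi>\<^sub>0) = f"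
    unfolding \<Phi>\<^sub>0_def by (rule someI_ex)
  moreover obtain v' e' f' where "\<Phi>\<^sub>0 = (v', e', f')" by (cases \<Phi>\<^sub>0)
  ultimately have "\<Phi>\<^sub>0 = (v', e', f)" "(v', e', f) \<in> flags F" by auto
  then show ?thesis unfolding face_orbit_def \<Phi>\<^sub>0_def[symmetric]
    using face_flags_same_orbit[OF assms] by simp
qed

lemma face_orbits_of_adjacent_faces:
  assumes "f \<in> F" "g \<in> F" "f \<noteq> g" "e \<in> f" "e \<in> g"
  shows "face_orbit f \<noteq> face_orbit g"
proof
  assume same: "face_orbit f = face_orbit g"
  obtain v where "v \<in> e" using edge_doubleton face_subset_E assms(1,4) by blast
  then have \<Phi>: "(v, e, f) \<in> flags F" and \<Psi>: "(v, e, g) \<in> flags F" using assms flags_iff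
    by auto
  have "(v, e, g) \<in> orbit (v, e, f)"
    using same face_orbit_flag[OF \<Phi>] face_orbit_flag[OF \<Psi>] orbit_refl by metis
  then show False using face_flip_not_in_orbit[OF \<Phi> \<Psi>] assms(3) by auto
qed

text \<open>Since there are exactly two flag orbits, the faces fall into two colour classes, and the two
  faces at an edge have different colours. The colour is recorded relative to an arbitrary reference
  face.\<close>

definition colour :: "'v set set \<Rightarrow> bool" where
  "colour f \<longleftrightarrow> face_orbit f = face_orbit (SOME g. g \<in> F)"

lemma F_nonempty: "F \<noteq> {}"
proof
  assume "F = {}"
  then have "flags F = {}" unfolding flags_def by simp
  then show False using card_flag_orbits by simp
qed

lemma colour_eq_iff:
  assumes "f \<in> F" "g \<in> F"
  shows "colour f = colour g \<longleftrightarrow> face_orbit f = face_orbit g"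
proof -
  have in_orbits: "face_orbit h \<in> orbit ` flags F" if "h \<in> F" for h
    using face_has_flag[OF that] face_orbit_flag by blast
  obtain A B where AB: "A \<noteq> B" "orbit ` flags F = {A, B}"
    using card_flag_orbits by (auto simp: card_2_iff)
  have "(SOME g. g \<in> F) \<in> F" using F_nonempty by (simp add: some_in_eq)
  then have "face_orbit f \<in> {A, B}" "face_orbit g \<in> {A, B}" "face_orbit (SOME g. g \<in> F) \<in> {A, B}"
    using in_orbits assms AB(2) by simp_all
  then show ?thesis using AB(1) unfolding colour_def by auto
qed

lemma colour_adjacent:
  assumes "f \<in> F" "g \<in> F" "f \<noteq> g" "e \<in> f" "e \<in> g"
  shows "colour f \<noteq> colour g"
  using face_orbits_of_adjacent_faces[OF assms] colour_eq_iff assms(1,2) by blast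

lemma colour_face_image:
  assumes "aut \<sigma>" "f \<in> F"
  shows "colour (face_image \<sigma> f) = colour f"
proof -
  obtain v e where \<Phi>: "(v, e, f) \<in> flags F" using face_has_flag assms(2) by blast
  have "face_orbit (face_image \<sigma> f) = orbit (flag_act \<sigma> (v, e, f))"
    using face_orbit_flag flag_act_flags[OF assms(1) \<Phi>] by (simp add: flag_act_Pair)
  also have "\<dots> = face_orbit f"
    using orbit_eq[OF \<Phi>] orbit_iff assms(1) face_orbit_flag[OF \<Phi>] by blast
  finally show ?thesis using colour_eq_iff aut_face assms by blast
qed

lemma same_colour_flag_transitive:
  assumes "colour f = colour g" "(v, e, f) \<in> flags F" "(v', e', g) \<in> flags F"
  obtains \<sigma> where "aut \<sigma>" "\<sigma> v = v'" "\<sigma> ` e = e'" "face_image \<sigma> f = g"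
proof -
  have "f \<in> F" "g \<in> F" using assms(2,3) flags_iff by auto
  then have "face_orbit f = face_orbit g" using assms(1) colour_eq_iff by blast
  then have "(v', e', g) \<in> orbit (v, e, f)"
    using face_orbit_flag[OF assms(2)] face_orbit_flag[OF assms(3)] orbit_refl by metis
  then obtain \<sigma> where "aut \<sigma>" "(v', e', g) = flag_act \<sigma> (v, e, f)"
    unfolding orbit_iff by blast
  then show ?thesis using that by (simp add: flag_act_Pair)
qed

lemma card_face_image:
  assumes "aut \<sigma>" "f \<in> F"
  shows "card (face_image \<sigma> f) = card f"
proof -
  have inj: "inj_on \<sigma> V" using aut_bij[OF assms(1)] bij_betw_imp_inj_on by blast
  have "inj_on (\<lambda>e. \<sigma> ` e) f"
    using inj_on_image_eq_iff[OF inj] face_vertices_subset_V[OF assms(2)] by (intro inj_onI) blast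
  then show ?thesis unfolding face_image_def by (simp add: card_image)
qed

lemma card_eq_if_colour_eq:
  assumes "f \<in> F" "g \<in> F" "colour f = colour g"
  shows "card f = card g"
proof -
  obtain v e where "(v, e, f) \<in> flags F" using face_has_flag assms(1) by blast
  moreover obtain v' e' where "(v', e', g) \<in> flags F" using face_has_flag assms(2) by blast
  ultimately obtain \<sigma> where "aut \<sigma>" "face_image \<sigma> f = g"
    using same_colour_flag_transitive[OF assms(3)] by metis
  then show ?thesis using card_face_image assms(1) by metis
qed

lemma card_face_lengths:
  assumes "f \<in> F" "g \<in> F" "card f \<noteq> card g"
  shows "card ((\<lambda>f. card f) ` F) = 2"
proof -
  have "colour f \<noteq> colour g" using card_eq_if_colour_eq assms by blast
  then have "card h = card f \<or> card h = card g" if "h \<in> F" for h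
    using card_eq_if_colour_eq[OF that assms(1)] card_eq_if_colour_eq[OF that assms(2)] by blast
  then have "(\<lambda>f. card f) ` F = {card f, card g}" using assms(1,2) by blast
  then show ?thesis using assms(3) by simp
qed

lemma ex1_face_of_colour:
  assumes "e \<in> E"
  shows "\<exists>!f. f \<in> F \<and> e \<in> f \<and> colour f = c"
proof -
  obtain f g where fg: "f \<in> F" "g \<in> F" "f \<noteq> g" "e \<in> f" "e \<in> g"
    and only: "\<And>h. h \<in> F \<Longrightarrow> e \<in> h \<Longrightarrow> h = f \<or> h = g"
    using faces_at_edge[OF assms] by blast
  have "colour f \<noteq> colour g" using colour_adjacent[OF fg] .
  then show ?thesis using fg only by (cases "colour f = c") (metis (full_types))+
qed

definition face_of_colour :: "bool \<Rightarrow> 'v set \<Rightarrow> 'v set set" where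
  "face_of_colour c e = (THE f. f \<in> F \<and> e \<in> f \<and> colour f = c)"

lemma face_of_colour:
  assumes "e \<in> E"
  shows "face_of_colour c e \<in> F \<and> e \<in> face_of_colour c e \<and> colour (face_of_colour c e) = c"
  unfolding face_of_colour_def by (rule theI'[OF ex1_face_of_colour[OF assms]])

lemma face_of_colour_eq:
  assumes "f \<in> F" "e \<in> f"
  shows "face_of_colour (colour f) e = f"
proof -
  have "e \<in> E" using assms face_subset_E by blast
  show ?thesis unfolding face_of_colour_def
    by (rule the1_equality[OF ex1_face_of_colour[OF \<open>e \<in> E\<close>]]) (simp add: assms)
qed

lemma face_of_colour_at_edge:
  assumes "e \<in> E" "d \<in> face_of_colour c e"
  shows "face_of_colour c d = face_of_colour c e"
proof -
  have "face_of_colour c e \<in> F" "colour (face_of_colour c e) = c" using face_of_colour[OF assms(1)]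
    by auto
  then show ?thesis using face_of_colour_eq[OF _ assms(2)] by simp
qed

lemma edge_reflection:
  assumes "f \<in> F" "{v, a} \<in> f"
  obtains \<sigma> where "aut \<sigma>" "\<sigma> v = a" "\<sigma> a = v" "face_image \<sigma> f = f"
proof -
  have "v \<noteq> a" using edge_doubleton face_subset_E assms
    by (metis doubleton_eq_iff insert_absorb2 subsetD)
  have \<Phi>: "(v, {v, a}, f) \<in> flags F" and \<Psi>: "(a, {v, a}, f) \<in> flags F"
    using assms flags_iff by auto
  obtain \<sigma> where \<sigma>: "aut \<sigma>" "(a, {v, a}, f) = flag_act \<sigma> (v, {v, a}, f)"
    using vertex_flip_in_orbit[OF \<Phi> \<Psi>] \<open>v \<noteq> a\<close> orbit_iff by metis
  then have "\<sigma> v = a" "{v, a} = {a, \<sigma> a}" "face_image \<sigma> f = f"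
    by (auto simp: flag_act_Pair)
  moreover have "\<sigma> a = v"
    using \<open>{v, a} = {a, \<sigma> a}\<close> \<open>v \<noteq> a\<close>
      by (auto simp: doubleton_eq_iff)
  ultimately show ?thesis using that \<sigma>(1) by blast
qed

lemma aut_fixes_face_at_fixed_edge:
  assumes "aut \<sigma>" "g \<in> F" "e \<in> g" "\<sigma> ` e = e"
  shows "face_image \<sigma> g = g"
proof -
  have "face_image \<sigma> g \<in> F" "e \<in> face_image \<sigma> g"
    using aut_face[OF assms(1,2)] face_image_in[OF assms(3), of \<sigma>] assms(4) by auto
  then have "face_of_colour (colour (face_image \<sigma> g)) e = face_image \<sigma> g"
    by (rule face_of_colour_eq)
  then have "face_of_colour (colour g) e = face_image \<sigma> g" using colour_face_image[OF assms(1,2)]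
    by simp
  then show ?thesis using face_of_colour_eq[OF assms(2,3)] by simp
qed

lemma vertex_transitive:
  assumes "x \<in> V" "y \<in> V"
  obtains \<sigma> where "aut \<sigma>" "\<sigma> x = y"
proof -
  have "(x, y) \<in> {(x, y). {x, y} \<in> E}\<^sup>*" using connected assms by blast
  then have "\<exists>\<sigma>. aut \<sigma> \<and> \<sigma> x = y"
  proof (induction rule: rtrancl_induct)
    case base
    show ?case using aut_id by auto
  next
    case (step y z)
    obtain \<sigma> where \<sigma>: "aut \<sigma>" "\<sigma> x = y" using step.IH by blast
    have "{y, z} \<in> E" using step.hyps(2) by simp
    then obtain f where "f \<in> F" "{y, z} \<in> f" using face_of_colour by blast
    then obtain \<tau> where "aut \<tau>" "\<tau> y = z" using edge_reflection by metis
    then show ?case using \<sigma> aut_comp by (metis comp_apply)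
  qed
  then show ?thesis using that by blast
qed

lemma shared_corner_degree_two:
  assumes "f \<in> F" "g \<in> F" "f \<noteq> g" "e1 \<noteq> e2" "e1 \<in> f" "e2 \<in> f" "e1 \<in> g" "e2 \<in> g"
    "w \<in> e1" "w \<in> e2" "e \<in> E" "w \<in> e"
  shows "e = e1 \<or> e = e2"
proof -
  have "e1 \<in> E" "e2 \<in> E" using assms(1,5,6) face_subset_E by auto
  have "w \<in> V" using edge_subset_V \<open>e1 \<in> E\<close> assms(9) by blast
  have "d \<in> {e1, e2}"
    if "(e1, d) \<in> {(d, d'). w \<in> d \<and> w \<in> d' \<and> (\<exists>h\<in>F. d \<in> h \<and> d' \<in> h)}\<^sup>*" for d
    using that
  proof (induction rule: rtrancl_induct)
    case (step d d')
    obtain h where h: "h \<in> F" "d \<in> h" "d' \<in> h" "w \<in> d'" using step.hyps(2) by blast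
    have "h = f \<or> h = g" using third_face_at_edge[OF assms(1,2) h(1) assms(3)] step.IH h(2) assms
      by blast
    then have "e1 \<in> h" "e2 \<in> h" using assms by auto
    then show ?case
      using cycle_edges_at_vertex[OF face_cycle[OF h(1)] _ _ h(3)] assms(4,9,10) h(4) by blast
  qed simp
  then show ?thesis
    using vertex_link_connected[OF \<open>w \<in> V\<close> \<open>e1 \<in> E\<close> assms(11,9,12)]
      by blast
qed

end

section \<open>The Rose Window graph \<open>R\<^sub>n(2,1)\<close>\<close>

lemma mod_add_diff_cancel:
  fixes i k n :: nat
  assumes "i < n" "k \<le> n"
  shows "((i + n - k) mod n + k) mod n = i"
proof -
  have "((i + n - k) mod n + k) mod n = (i + n - k + k) mod n" by (simp add: mod_add_left_eq)
  also have "\<dots> = i" using assms by simp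
  finally show ?thesis .
qed

lemma mod_diff_add_cancel:
  fixes i k n :: nat
  assumes "i < n" "k \<le> n"
  shows "((i + k) mod n + n - k) mod n = i"
proof -
  have "((i + k) mod n + n - k) mod n = ((i + k) mod n + (n - k)) mod n" using assms(2) by simp
  also have "\<dots> = (i + k + (n - k)) mod n" by (simp add: mod_add_left_eq)
  also have "\<dots> = i" using assms by simp
  finally show ?thesis .
qed

locale rose_window_2_1 =
  fixes n :: nat
  assumes n_ge_3: "n \<ge> 3"
begin

abbreviation V :: "(bool \<times> nat) set" where "V \<equiv> rose_V n"

abbreviation E :: "(bool \<times> nat) set set" where "E \<equiv> rose_E n 2 1"

text \<open>With \<open>x\<^sub>i = (False, i)\<close> and \<open>y\<^sub>i = (True, i)\<close>, the vertex \<open>y\<^sub>i\<close> lies in block \<open>i\<close> and \<open>x\<^sub>i\<close> in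
  block \<open>i - 1\<close>. Every vertex of block \<open>i\<close> is adjacent exactly to the four vertices of the blocks
  \<open>i \<plusminus> 1\<close>, i.e. \<open>R\<^sub>n(2,1)\<close> is the lexicographic product of \<open>C\<^sub>n\<close> with two independent vertices, and
  \<open>twin x\<close> is the other vertex in the block of \<open>x\<close>.\<close>

definition block :: "bool \<times> nat \<Rightarrow> int" where
  "block x = (if fst x then int (snd x) else (int (snd x) - 1) mod int n)"

definition twin :: "bool \<times> nat \<Rightarrow> bool \<times> nat" where
  "twin x = (if fst x then (False, (snd x + 1) mod n) else (True, (snd x + n - 1) mod n))"

definition up :: "bool \<times> nat \<Rightarrow> bool \<times> nat \<Rightarrow> bool" where
  "up x y \<longleftrightarrow> block y = (block x + 1) mod int n"

lemma n_pos: "n > 0" using n_ge_3 by simp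

lemma dvd_small_eq_0:
  fixes k :: int
  assumes "int n dvd k" "\<bar>k\<bar> < int n"
  shows "k = 0"
  using dvd_imp_le_int[of k "int n"] assms by (cases "k = 0") auto

lemma in_V_iff: "x \<in> V \<longleftrightarrow> snd x < n"
  unfolding rose_V_def by (cases x) auto

lemma block_bounds: "0 \<le> block x" "block x < int n" if "x \<in> V"
  using that n_pos unfolding block_def in_V_iff by auto

lemma twin_in_V: "x \<in> V \<Longrightarrow> twin x \<in> V"
  unfolding twin_def in_V_iff using n_pos by auto

lemma twin_twin: "x \<in> V \<Longrightarrow> twin (twin x) = x"
proof -
  assume "x \<in> V"
  then have i: "snd x < n" by (simp add: in_V_iff)
  obtain b i0 where x: "x = (b, i0)" by (cases x)
  show ?thesis
  proof (cases b)
    case True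
    then show ?thesis using i x n_ge_3
      by (cases "i0 + 1 < n") (auto simp: twin_def le_mod_geq)
  next
    case False
    then show ?thesis using i x n_ge_3
      by (cases "i0 = 0") (auto simp: twin_def mod_Suc_eq le_mod_geq)
  qed
qed

lemma twin_neq: "twin x \<noteq> x"
  unfolding twin_def by (cases x) auto

lemma block_twin: "x \<in> V \<Longrightarrow> block (twin x) = block x"
proof -
  assume "x \<in> V"
  then have i: "snd x < n" by (simp add: in_V_iff)
  obtain b i0 where x: "x = (b, i0)" by (cases x)
  show ?thesis
  proof (cases b)
    case True
    have "block (twin x) = (int ((i0 + 1) mod n) - 1) mod int n" using x True
      by (simp add: block_def twin_def)
    also have "\<dots> = (int (i0 + 1) - 1) mod int n"
      by (simp add: of_nat_mod mod_diff_left_eq add.commute)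
    also have "\<dots> = int i0" using i x by simp
    finally show ?thesis using x True by (simp add: block_def)
  next
    case False
    have "block (twin x) = int ((i0 + n - 1) mod n)" using x False by (simp add: block_def twin_def)
    also have "\<dots> = int (i0 + n - 1) mod int n" by (simp add: of_nat_mod)
    also have "int (i0 + n - 1) = int i0 - 1 + int n" using n_ge_3 by simp
    also have "(int i0 - 1 + int n) mod int n = (int i0 - 1) mod int n" by simp
    finally show ?thesis using x False by (simp add: block_def)
  qed
qed

lemma twin_eq_iff: "x \<in> V \<Longrightarrow> y \<in> V \<Longrightarrow> twin x = twin y \<longleftrightarrow> x = y"
  using twin_twin by metis

lemma eq_if_fst_block_eq:
  assumes "x \<in> V" "y \<in> V" "fst x = fst y" "block x = block y"
  shows "x = y"
proof -
  obtain b i where x: "x = (b, i)" by (cases x)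
  obtain j where y: "y = (b, j)" using assms(3) x by (cases y) auto
  have i: "i < n" and j: "j < n" using assms(1,2) x y by (auto simp: in_V_iff)
  show ?thesis
  proof (cases b)
    case True then show ?thesis using assms(4) x y by (simp add: block_def)
  next
    case False
    then have "(int i - 1) mod int n = (int j - 1) mod int n" using assms(4) x y
      by (simp add: block_def)
    then have "int n dvd ((int i - 1) - (int j - 1))" by (simp add: mod_eq_dvd_iff)
    then have "int n dvd (int i - int j)" by simp
    then have "int i - int j = 0" using i j by (intro dvd_small_eq_0) auto
    then show ?thesis using x y by simp
  qed
qed

lemma fst_twin: "fst (twin x) = (\<not> fst x)"
  unfolding twin_def by auto

lemma same_block:
  assumes "x \<in> V" "y \<in> V" "block x = block y"
  shows "y = x \<or> y = twin x"
proof (cases "fst y = fst x")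
  case True then show ?thesis using eq_if_fst_block_eq assms by metis
next
  case False
  then have "fst y = fst (twin x)" by (simp add: fst_twin)
  moreover have "block y = block (twin x)" using block_twin assms by simp
  ultimately show ?thesis using eq_if_fst_block_eq[OF assms(2) twin_in_V[OF assms(1)]] by simp
qed

lemma block_mod: "x \<in> V \<Longrightarrow> block x mod int n = block x"
  using block_bounds by simp

definition up_x :: "bool \<times> nat \<Rightarrow> bool \<times> nat" where
  "up_x x = (if fst x then (False, (snd x + 2) mod n) else (False, (snd x + 1) mod n))"

definition up_y :: "bool \<times> nat \<Rightarrow> bool \<times> nat" where
  "up_y x = (if fst x then (True, (snd x + 1) mod n) else (True, snd x))"

lemma up_x_in_V: "x \<in> V \<Longrightarrow> up_x x \<in> V" unfolding up_x_def in_V_iff using n_pos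
  by auto

lemma up_y_in_V: "x \<in> V \<Longrightarrow> up_y x \<in> V" unfolding up_y_def in_V_iff using n_pos
  by auto

lemma up_up_x: "x \<in> V \<Longrightarrow> up x (up_x x)"
proof -
  assume xV: "x \<in> V"
  obtain b i where x: "x = (b, i)" by (cases x)
  have i: "i < n" using xV x by (simp add: in_V_iff)
  show ?thesis
  proof (cases b)
    case True
    have "block (up_x x) = (int ((i + 2) mod n) - 1) mod int n" using x True
      by (simp add: block_def up_x_def)
    also have "\<dots> = (int i + 1) mod int n" by (simp add: of_nat_mod mod_diff_left_eq add.commute)
    finally show ?thesis using x True by (simp add: up_def block_def)
  next
    case False
    have "block (up_x x) = (int ((i + 1) mod n) - 1) mod int n" using x False
      by (simp add: block_def up_x_def)
    also have "\<dots> = int i mod int n" by (simp add: of_nat_mod mod_diff_left_eq add.commute)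
    also have "\<dots> = ((int i - 1) mod int n + 1) mod int n" by (simp add: mod_add_left_eq)
    finally show ?thesis using x False by (simp add: up_def block_def)
  qed
qed

lemma up_up_y: "x \<in> V \<Longrightarrow> up x (up_y x)"
proof -
  assume xV: "x \<in> V"
  obtain b i where x: "x = (b, i)" by (cases x)
  have i: "i < n" using xV x by (simp add: in_V_iff)
  show ?thesis
  proof (cases b)
    case True
    show ?thesis using x True by (simp add: up_def block_def up_y_def of_nat_mod add.commute)
  next
    case False
    have "block (up_y x) = int i mod int n" using x False i by (simp add: block_def up_y_def)
    also have "\<dots> = ((int i - 1) mod int n + 1) mod int n" by (simp add: mod_add_left_eq)
    finally show ?thesis using x False by (simp add: up_def block_def)
  qed
qed

lemma edge_up_x: "x \<in> V \<Longrightarrow> {x, up_x x} \<in> E"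
proof -
  assume xV: "x \<in> V"
  obtain b i where x: "x = (b, i)" by (cases x)
  have i: "i < n" using xV x by (simp add: in_V_iff)
  show ?thesis
  proof (cases b)
    case True
    define j where "j = (i + 2) mod n"
    have j: "j < n" using n_pos j_def by simp
    have "(j + n - 2) mod n = i" unfolding j_def using mod_diff_add_cancel[OF i, of 2] n_ge_3
      by linarith
    then have "{(False, j), (True, (j + n - 2) mod n)} \<in> E"
      unfolding rose_E_def using j by auto
    then show ?thesis using x True \<open>(j + n - 2) mod n = i\<close> j_def
      by (simp add: up_x_def insert_commute)
  next
    case False
    have "{(False, i), (False, (i + 1) mod n)} \<in> E" unfolding rose_E_def using i by auto
    then show ?thesis using x False by (simp add: up_x_def)
  qed
qed

lemma edge_up_y: "x \<in> V \<Longrightarrow> {x, up_y x} \<in> E"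
proof -
  assume xV: "x \<in> V"
  obtain b i where x: "x = (b, i)" by (cases x)
  have i: "i < n" using xV x by (simp add: in_V_iff)
  show ?thesis
  proof (cases b)
    case True
    have "{(True, i), (True, (i + 1) mod n)} \<in> E" unfolding rose_E_def using i by auto
    then show ?thesis using x True by (simp add: up_y_def)
  next
    case False
    have "{(False, i), (True, i)} \<in> E" unfolding rose_E_def using i by auto
    then show ?thesis using x False by (simp add: up_y_def)
  qed
qed

lemma fst_up_x: "fst (up_x x) = False" unfolding up_x_def by auto

lemma fst_up_y: "fst (up_y x) = True" unfolding up_y_def by auto

lemma up_cases:
  assumes "x \<in> V" "y \<in> V" "up x y"
  shows "y = up_x x \<or> y = up_y x"
proof -
  have "block y = block (up_x x)" "block y = block (up_y x)"
    using assms up_up_x up_up_y unfolding up_def by auto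
  then show ?thesis
    using eq_if_fst_block_eq[OF assms(2) up_x_in_V[OF assms(1)]]
      eq_if_fst_block_eq[OF assms(2) up_y_in_V[OF assms(1)]]
      fst_up_x fst_up_y by (cases "fst y") auto
qed

lemma up_edge: "x \<in> V \<Longrightarrow> y \<in> V \<Longrightarrow> up x y \<Longrightarrow> {x, y} \<in> E"
  using up_cases edge_up_x edge_up_y by blast

lemma edge_up_cases:
  assumes "e \<in> E"
  shows "\<exists>x y. x \<in> V \<and> y \<in> V \<and> up x y \<and> e = {x, y}"
proof -
  obtain i where i: "i < n" and e: "e = {(False, i), (False, (i + 1) mod n)} \<or>
      e = {(True, i), (True, (i + 1) mod n)} \<or> e = {(False, i), (True, i)} \<or>
      e = {(False, i), (True, (i + n - 2) mod n)}"
    using assms unfolding rose_E_def by auto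
  have xF: "(False, i) \<in> V" and xT: "(True, i) \<in> V" using i by (auto simp: in_V_iff)
  consider (a) "e = {(False, i), (False, (i + 1) mod n)}"
    | (b) "e = {(True, i), (True, (i + 1) mod n)}"
    | (c) "e = {(False, i), (True, i)}" | (d) "e = {(False, i), (True, (i + n - 2) mod n)}"
    using e by blast
  then show ?thesis
  proof cases
    case a
    then have "e = {(False, i), up_x (False, i)}" by (simp add: up_x_def)
    then show ?thesis using xF up_x_in_V up_up_x by blast
  next
    case b
    then have "e = {(True, i), up_y (True, i)}" by (simp add: up_y_def)
    then show ?thesis using xT up_y_in_V up_up_y by blast
  next
    case c
    then have "e = {(False, i), up_y (False, i)}" by (simp add: up_y_def)
    then show ?thesis using xF up_y_in_V up_up_y by blast
  next
    case d
    define y where "y = (True, (i + n - 2) mod n)"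
    have yV: "y \<in> V" using n_pos by (simp add: y_def in_V_iff)
    have "((i + n - 2) mod n + 2) mod n = i" using mod_add_diff_cancel[OF i, of 2] n_ge_3
      by linarith
    then have "up_x y = (False, i)" by (simp add: up_x_def y_def)
    then have "e = {y, up_x y}" using d y_def by auto
    then show ?thesis using yV up_x_in_V up_up_x by blast
  qed
qed

definition adj :: "bool \<times> nat \<Rightarrow> bool \<times> nat \<Rightarrow> bool" where
  "adj x y \<longleftrightarrow> up x y \<or> up y x"

lemma adj_sym: "adj x y \<Longrightarrow> adj y x" unfolding adj_def by blast

lemma edge_iff_adj:
  assumes "x \<in> V" "y \<in> V"
  shows "{x, y} \<in> E \<longleftrightarrow> adj x y"
proof
  assume "{x, y} \<in> E"
  then obtain x' y' where "x' \<in> V" "y' \<in> V" "up x' y'" "{x, y} = {x', y'}" using edge_up_cases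
    by blast
  then show "adj x y" unfolding adj_def doubleton_eq_iff by auto
next
  assume "adj x y"
  then show "{x, y} \<in> E" using up_edge[OF assms] up_edge[OF assms(2,1)] unfolding adj_def
    by (metis insert_commute)
qed

lemma edge_adj: "e \<in> E \<Longrightarrow> \<exists>x y. x \<in> V \<and> y \<in> V \<and> adj x y \<and> e = {x, y}"
  using edge_up_cases adj_def by blast

lemma not_up_refl: "x \<in> V \<Longrightarrow> \<not> up x x"
proof
  assume xV: "x \<in> V" and u: "up x x"
  have r: "0 \<le> block x" "block x < int n" using block_bounds xV by auto
  show False
  proof (cases "block x + 1 < int n")
    case True then show False using u r by (simp add: up_def)
  next
    case False then have "block x + 1 = int n" using r by simp
    then show False using u r n_ge_3 by (simp add: up_def)
  qed
qed

lemma adj_neq: "x \<in> V \<Longrightarrow> adj x y \<Longrightarrow> x \<noteq> y"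
  using not_up_refl[of x] unfolding adj_def by blast

lemma up_iff_dvd: "x \<in> V \<Longrightarrow> y \<in> V \<Longrightarrow> up x y \<longleftrightarrow> int n dvd (block y - block x - 1)"
proof -
  assume xV: "x \<in> V" and yV: "y \<in> V"
  have "up x y \<longleftrightarrow> block y mod int n = (block x + 1) mod int n"
    using block_mod[OF yV] up_def by simp
  also have "\<dots> \<longleftrightarrow> int n dvd (block y - (block x + 1))"
    by (simp add: mod_eq_dvd_iff)
  finally show ?thesis by (simp add: algebra_simps)
qed

lemma same_block_iff_dvd: "x \<in> V \<Longrightarrow> y \<in> V \<Longrightarrow> block x = block y \<longleftrightarrow> int n dvd (block y - block x)"
proof -
  assume xV: "x \<in> V" and yV: "y \<in> V"
  have "block x = block y \<longleftrightarrow> block y mod int n = block x mod int n"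
    using block_mod[OF yV] block_mod[OF xV] by auto
  also have "\<dots> \<longleftrightarrow> int n dvd (block y - block x)" by (simp add: mod_eq_dvd_iff)
  finally show ?thesis .
qed

lemma not_dvd_1_2: "\<not> int n dvd 1" "\<not> int n dvd 2" "\<not> int n dvd -2"
  using dvd_small_eq_0[of 1] dvd_small_eq_0[of 2] dvd_small_eq_0[of "-2"] n_ge_3 by auto

lemma not_dvd_4:
  assumes "n \<noteq> 4"
  shows "\<not> int n dvd 4" "\<not> int n dvd -4"
proof -
  show "\<not> int n dvd 4"
  proof (cases "n = 3")
    case False
    then show ?thesis using dvd_small_eq_0[of 4] n_ge_3 assms by auto
  qed simp
  then show "\<not> int n dvd -4" by simp
qed

lemma up_asym: "x \<in> V \<Longrightarrow> y \<in> V \<Longrightarrow> up x y \<Longrightarrow> \<not> up y x"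
proof
  assume xV: "x \<in> V" and yV: "y \<in> V" and u1: "up x y" and u2: "up y x"
  have "int n dvd (block y - block x - 1)" "int n dvd (block x - block y - 1)"
    using u1 u2 up_iff_dvd xV yV by auto
  then have "int n dvd ((block y - block x - 1) + (block x - block y - 1))" by (rule dvd_add)
  then show False using not_dvd_1_2 by simp
qed

lemma up_twin: "x \<in> V \<Longrightarrow> y \<in> V \<Longrightarrow> up x y \<Longrightarrow> up x (twin y) \<and> up (twin x) y"
  using block_twin unfolding up_def by auto

lemma adj_twin: "x \<in> V \<Longrightarrow> y \<in> V \<Longrightarrow> adj x y \<Longrightarrow> adj x (twin y) \<and> adj (twin x) y"
  using block_twin unfolding adj_def up_def by auto

lemma up_targets: "x \<in> V \<Longrightarrow> y \<in> V \<Longrightarrow> z \<in> V \<Longrightarrow> up x y \<Longrightarrow> up x z \<Longrightarrow> z = y \<or> z = twin y"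
  using same_block unfolding up_def by auto

lemma up_sources: "x \<in> V \<Longrightarrow> y \<in> V \<Longrightarrow> z \<in> V \<Longrightarrow> up y x \<Longrightarrow> up z x \<Longrightarrow> z = y \<or> z = twin y"
proof -
  assume a: "x \<in> V" "y \<in> V" "z \<in> V" "up y x" "up z x"
  then have "int n dvd (block x - block y - 1)" "int n dvd (block x - block z - 1)" using up_iff_dvd
    by auto
  then have "int n dvd ((block x - block y - 1) - (block x - block z - 1))" by (rule dvd_diff)
  then have "int n dvd (block z - block y)" by (simp add: algebra_simps)
  then have "block y = block z" using same_block_iff_dvd a by simp
  then show ?thesis using same_block a by simp
qed

lemma exists_up_to:
  assumes "w \<in> V"
  obtains x where "x \<in> V" "up x w"
proof -
  define k where "k = nat ((block w - 1) mod int n)"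
  have k: "int k = (block w - 1) mod int n" using n_pos unfolding k_def by simp
  then have "int k < int n" using n_pos by simp
  then have "(True, k) \<in> V" by (simp add: in_V_iff)
  moreover have "block w = (int k + 1) mod int n"
    unfolding k using block_mod[OF assms] by (simp add: mod_add_left_eq)
  then have "up (True, k) w" by (simp add: up_def block_def)
  ultimately show ?thesis using that by blast
qed

lemma third_edge_at:
  assumes "w \<in> V"
  obtains e where "e \<in> E" "w \<in> e" "e \<noteq> e1" "e \<noteq> e2"
proof -
  obtain a3 where a3: "a3 \<in> V" "up a3 w" using exists_up_to[OF assms] by blast
  define a4 where "a4 = twin a3"
  define a1 where "a1 = up_x w"
  define a2 where "a2 = up_y w"
  have V: "a1 \<in> V" "a2 \<in> V" "a4 \<in> V"
    using assms a3 up_x_in_V up_y_in_V twin_in_V unfolding a1_def a2_def a4_def by auto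
  have u: "up w a1" "up w a2" "up a4 w"
    using assms a3 up_up_x up_up_y up_twin unfolding a1_def a2_def a4_def by auto
  have E: "{w, a1} \<in> E" "{w, a2} \<in> E" "{w, a3} \<in> E"
    using edge_iff_adj assms V u a3 adj_def by (auto simp: insert_commute)
  have "a1 \<noteq> a2" unfolding a1_def a2_def using fst_up_x fst_up_y by metis
  moreover have "a1 \<noteq> a3" "a2 \<noteq> a3" using u a3 up_asym assms V by metis+
  ultimately have "{w, a1} \<noteq> {w, a2}" "{w, a1} \<noteq> {w, a3}" "{w, a2} \<noteq> {w, a3}"
    by (auto simp: doubleton_eq_iff)
  then show ?thesis using that E by (metis insertI1)
qed

lemma same_neighbours_imp_same_block:
  assumes "n \<noteq> 4" "a \<in> V" "b \<in> V" "\<And>y. y \<in> V \<Longrightarrow> adj a y \<longleftrightarrow> adj b y"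
  shows "block a = block b"
proof (rule ccontr)
  assume ne: "block a \<noteq> block b"
  have nd: "\<not> int n dvd (block b - block a)" using same_block_iff_dvd assms(2,3) ne by metis
  have above: "up_y a \<in> V" "up a (up_y a)" using up_y_in_V up_up_y assms(2) by auto
  obtain below where below: "below \<in> V" "up below a" using exists_up_to[OF assms(2)] by blast
  have A: "int n dvd (block (up_y a) - block a - 1)" using up_iff_dvd above assms(2) by blast
  have B: "int n dvd (block a - block below - 1)" using up_iff_dvd below assms(2) by blast
  have "adj b (up_y a)" using assms(4)[OF above(1)] above adj_def by blast
  then have "up (up_y a) b"
  proof (unfold adj_def, elim disjE)
    assume "up b (up_y a)"
    then have "int n dvd (block (up_y a) - block b - 1)" using up_iff_dvd above assms(3) by blast
    then have "int n dvd ((block (up_y a) - block a - 1) - (block (up_y a) - block b - 1))"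
      using A dvd_diff by blast
    then show ?thesis using nd by (simp add: algebra_simps)
  qed
  then have "int n dvd (block b - block (up_y a) - 1)" using up_iff_dvd above assms(3) by blast
  then have "int n dvd ((block b - block (up_y a) - 1) + (block (up_y a) - block a - 1))"
    using A dvd_add
    by blast
  then have c1: "int n dvd (block b - block a - 2)" by (simp add: algebra_simps)
  have "adj b below" using assms(4)[OF below(1)] below adj_def by blast
  then have "up b below"
  proof (unfold adj_def, elim disjE)
    assume "up below b"
    then have "int n dvd (block b - block below - 1)" using up_iff_dvd below assms(3) by blast
    then have "int n dvd ((block a - block below - 1) - (block b - block below - 1))"
      using B dvd_diff
      by blast
    then have "int n dvd (block b - block a)" by (simp add: algebra_simps dvd_diff_commute)
    then show ?thesis using nd by blast
  qed
  then have "int n dvd (block below - block b - 1)" using up_iff_dvd below assms(3) by blast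
  then have "int n dvd ((block below - block b - 1) + (block a - block below - 1))" using B dvd_add
    by blast
  then have "int n dvd (block a - block b - 2)" by (simp add: algebra_simps)
  then have "int n dvd ((block b - block a - 2) + (block a - block b - 2))" using c1 dvd_add
    by blast
  then show False using not_dvd_4[OF assms(1)] by simp
qed

lemma graph_aut_twin:
  assumes "n \<noteq> 4" "bij_betw \<sigma> V V" "\<And>u v. u \<in> V \<Longrightarrow> v \<in> V \<Longrightarrow> {\<sigma> u, \<sigma> v} \<in> E \<longleftrightarrow> {u, v} \<in> E"
    "x \<in> V"
  shows "\<sigma> (twin x) = twin (\<sigma> x)"
proof -
  have \<sigma>_V: "\<sigma> y \<in> V" if "y \<in> V" for y using assms(2) that bij_betwE by blast
  have \<sigma>_adj: "adj (\<sigma> u) (\<sigma> v) \<longleftrightarrow> adj u v" if "u \<in> V" "v \<in> V" for u v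
    using assms(3) edge_iff_adj \<sigma>_V that by metis
  have tx: "twin x \<in> V" using twin_in_V assms(4) by blast
  have "adj (\<sigma> (twin x)) y \<longleftrightarrow> adj (\<sigma> x) y" if y: "y \<in> V" for y
  proof -
    obtain z where z: "z \<in> V" "\<sigma> z = y" using assms(2) y by (metis bij_betw_iff_bijections)
    have "adj (twin x) z \<longleftrightarrow> adj x z" using adj_twin twin_twin assms(4) tx z(1)
      by metis
    then show ?thesis using \<sigma>_adj[OF tx z(1)] \<sigma>_adj[OF assms(4) z(1)] z(2) by simp
  qed
  then have "block (\<sigma> x) = block (\<sigma> (twin x))"
    using same_neighbours_imp_same_block[OF assms(1)] \<sigma>_V assms(4) tx by metis
  then have "\<sigma> (twin x) = \<sigma> x \<or> \<sigma> (twin x) = twin (\<sigma> x)"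
    using same_block \<sigma>_V assms(4) tx by blast
  moreover have "\<sigma> (twin x) \<noteq> \<sigma> x"
    using assms(2,4) tx twin_neq by (metis bij_betw_imp_inj_on inj_onD)
  ultimately show ?thesis by blast
qed

lemma up3_not_adj:
  assumes "n \<noteq> 4" "x0 \<in> V" "x1 \<in> V" "x2 \<in> V" "x3 \<in> V" "up x0 x1" "up x1 x2" "up x2 x3"
  shows "\<not> adj x0 x3"
proof
  assume a: "adj x0 x3"
  have "int n dvd (block x1 - block x0 - 1)" "int n dvd (block x2 - block x1 - 1)"
    "int n dvd (block x3 - block x2 - 1)"
    using up_iff_dvd assms by auto
  then have "int n dvd
      ((block x1 - block x0 - 1) + (block x2 - block x1 - 1) + (block x3 - block x2 - 1))"
    by (intro dvd_add)
  then have d3: "int n dvd (block x3 - block x0 - 3)" by (simp add: algebra_simps)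
  from a show False unfolding adj_def
  proof
    assume "up x0 x3"
    then have "int n dvd (block x3 - block x0 - 1)" using up_iff_dvd assms by auto
    then have "int n dvd ((block x3 - block x0 - 1) - (block x3 - block x0 - 3))" using d3 dvd_diff
      by blast
    then show False using not_dvd_1_2 by simp
  next
    assume "up x3 x0"
    then have "int n dvd (block x0 - block x3 - 1)" using up_iff_dvd assms by auto
    then have "int n dvd ((block x0 - block x3 - 1) + (block x3 - block x0 - 3))" using d3 dvd_add
      by blast
    then show False using not_dvd_4[OF assms(1)] by simp
  qed
qed

lemma edge_other_end:
  assumes "d \<in> E" "v \<in> d"
  obtains b where "d = {v, b}" "b \<in> V" "adj v b"
proof -
  obtain x y where xy: "x \<in> V" "y \<in> V" "adj x y" "d = {x, y}" using edge_adj assms(1) by blast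
  then have "d = {v, if v = x then y else x}" "adj v (if v = x then y else x)"
    using assms(2) adj_def by auto
  then show ?thesis using that xy by (metis (full_types))
qed

lemma opposite_sides:
  assumes "w \<in> V" "u \<in> V" "z \<in> V" "adj w u" "adj w z" "z \<noteq> u" "z \<noteq> twin u"
  shows "(up u w \<and> up w z) \<or> (up w u \<and> up z w)"
proof (cases "up u w")
  case True
  have "\<not> up z w" using up_sources[OF assms(1,2,3) True] assms(6,7) by blast
  then show ?thesis using True assms(5) adj_def by blast
next
  case False
  then have "up w u" using assms(4) adj_def by blast
  moreover have "\<not> up w z" using up_targets[OF assms(1,2,3) \<open>up w u\<close>] assms(6,7)
    by blast
  ultimately show ?thesis using assms(5) adj_def by blast
qed

lemma same_side_cases:
  assumes "w \<in> V" "u \<in> V" "z1 \<in> V" "z2 \<in> V"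
    "(up u w \<and> up w z1) \<or> (up w u \<and> up z1 w)" "(up u w \<and> up w z2) \<or> (up w u \<and> up z2 w)"
  shows "z2 = z1 \<or> z2 = twin z1"
proof (cases "up u w")
  case True
  then have "up w z1" "up w z2" using assms(5,6) up_asym assms(1,2) by blast+
  then show ?thesis using up_targets assms(1,3,4) by blast
next
  case False
  then have "up z1 w" "up z2 w" using assms(5,6) by blast+
  then show ?thesis using up_sources assms(1,3,4) by blast
qed

definition twin_if :: "bool \<Rightarrow> bool \<times> nat \<Rightarrow> bool \<times> nat" where
  "twin_if d x = (if d then twin x else x)"

lemma twin_if_simps: "twin_if False x = x" "twin_if True x = twin x"
  unfolding twin_if_def by simp_all

lemma twin_if_in_V: "x \<in> V \<Longrightarrow> twin_if d x \<in> V"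
  unfolding twin_if_def using twin_in_V by auto

lemma twin_if_twin_if: "x \<in> V \<Longrightarrow> twin_if a (twin_if b x) = twin_if (a \<noteq> b) x"
  unfolding twin_if_def using twin_twin by auto

lemma block_twin_if: "x \<in> V \<Longrightarrow> block (twin_if d x) = block x"
  unfolding twin_if_def using block_twin by auto

lemma adj_twin_if: "x \<in> V \<Longrightarrow> y \<in> V \<Longrightarrow> adj (twin_if a x) (twin_if b y) \<longleftrightarrow> adj x y"
  unfolding adj_def up_def using block_twin_if by simp

end

section \<open>Faces with a twin corner\<close>

locale rose_window_map = rose_window_2_1 n + class_2_01_map "rose_V n" "rose_E n 2 1" F
  for n :: nat and F :: "(bool \<times> nat) set set set" +
  assumes n_ne_4: "n \<noteq> 4"
begin

lemma aut_twin: "aut \<sigma> \<Longrightarrow> x \<in> V \<Longrightarrow> \<sigma> (twin x) = twin (\<sigma> x)"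
  using graph_aut_twin[OF n_ne_4 aut_bij] aut_edge_iff by blast

lemma aut_adj:
  assumes "aut \<sigma>" "a \<in> V" "b \<in> V"
  shows "adj (\<sigma> a) (\<sigma> b) \<longleftrightarrow> adj a b"
proof -
  have "adj (\<sigma> a) (\<sigma> b) \<longleftrightarrow> {\<sigma> a, \<sigma> b} \<in> E"
    using edge_iff_adj aut_in_V assms by simp
  also have "\<dots> \<longleftrightarrow> {a, b} \<in> E" using aut_edge_iff assms by simp
  finally show ?thesis using edge_iff_adj assms by simp
qed

lemma face_edge_adj:
  assumes "f \<in> F" "{x, y} \<in> f"
  shows "x \<in> V \<and> y \<in> V \<and> adj x y"
proof -
  have "{x, y} \<in> E" using assms face_subset_E by blast
  moreover have "x \<in> V" "y \<in> V" using edge_subset_V[OF \<open>{x, y} \<in> E\<close>] by auto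
  ultimately show ?thesis using edge_iff_adj by blast
qed

lemma no_shared_corner:
  assumes "f \<in> F" "g \<in> F" "f \<noteq> g" "e1 \<noteq> e2" "e1 \<in> f" "e2 \<in> f" "e1 \<in> g" "e2 \<in> g"
    "w \<in> e1" "w \<in> e2"
  shows False
proof -
  have "w \<in> V" using assms(1,5,9) face_vertices_subset_V by blast
  then obtain e where "e \<in> E" "w \<in> e" "e \<noteq> e1" "e \<noteq> e2" by (rule third_edge_at)
  then show False using shared_corner_degree_two[OF assms] by blast
qed

lemma twin_corner_face:
  assumes f: "f \<in> F" "{v, a} \<in> f" "{v, twin a} \<in> f"
  shows "f = {{v, a}, {a, twin v}, {twin v, twin a}, {twin a, v}}" "card f = 4"
proof -
  define a' v' where "a' = twin a" and "v' = twin v"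
  have V: "v \<in> V" "a \<in> V" "a' \<in> V" "v' \<in> V" and "adj v a"
    using face_edge_adj[OF f(1,2)] twin_in_V unfolding a'_def v'_def by auto
  obtain \<sigma> where \<sigma>: "aut \<sigma>" "\<sigma> v = a" "\<sigma> a = v" "face_image \<sigma> f = f"
    using edge_reflection[OF f(1,2)] .
  obtain \<tau> where \<tau>: "aut \<tau>" "\<tau> v = a'" "\<tau> a' = v" "face_image \<tau> f = f"
    using edge_reflection[OF f(1,3)] unfolding a'_def .
  have "\<sigma> ` {v, a'} \<in> f" using face_image_in[OF f(3), of \<sigma>] \<sigma>(4) a'_def by simp
  moreover have "\<sigma> a' = v'" unfolding a'_def v'_def
    using aut_twin[OF \<sigma>(1) V(2)] \<sigma>(3) by simp
  ultimately have e3: "{a, v'} \<in> f" using \<sigma>(2) by simp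
  have "\<tau> ` {v, a} \<in> f" using face_image_in[OF f(2), of \<tau>] \<tau>(4) by simp
  moreover have "\<tau> a = v'"
    using aut_twin[OF \<tau>(1) V(3)] \<tau>(3) twin_twin[OF V(2)] unfolding a'_def v'_def by simp
  ultimately have e4: "{a', v'} \<in> f" using \<tau>(2) by simp
  have "adj v a'" "adj a v'" "adj a' v'"
    using face_edge_adj[OF f(1) f(3)] face_edge_adj[OF f(1) e3] face_edge_adj[OF f(1) e4] a'_def
      by auto
  then have "v \<noteq> a" "v \<noteq> a'" "a \<noteq> v'" "a' \<noteq> v'"
    using adj_neq[OF V(1) \<open>adj v a\<close>] adj_neq[OF V(1)] adj_neq[OF V(2)] adj_neq[OF V(3)]
      by auto
  moreover have "v \<noteq> v'" "a \<noteq> a'" using twin_neq unfolding a'_def v'_def by metis+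
  ultimately have "distinct [v, a, v', a']" by auto
  then have "is_cycle_edges {{v, a}, {a, v'}, {v', a'}, {a', v}}" by (rule is_cycle_edges_square)
  moreover have "{v', a'} \<in> f" "{a', v} \<in> f" using e4 f(3) a'_def
    by (simp_all add: insert_commute)
  then have "{{v, a}, {a, v'}, {v', a'}, {a', v}} \<subseteq> f" using f(2) e3
    by (intro insert_subsetI empty_subsetI)
  ultimately have square: "{{v, a}, {a, v'}, {v', a'}, {a', v}} = f"
    by (rule cycle_subset_eq[OF face_cycle[OF f(1)]])
  then show "f = {{v, a}, {a, twin v}, {twin v, twin a}, {twin a, v}}" unfolding a'_def v'_def
    by simp
  have "\<Union> f = {v, a, v', a'}" using square[symmetric] by auto
  then show "card f = 4"
    using card_cycle_vertices[OF face_cycle[OF f(1)]] \<open>distinct [v, a, v', a']\<close> by simp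
qed

lemma not_adj_across_two_corners:
  assumes "v \<in> V" "a \<in> V" "b \<in> V" "c \<in> V" "adj v a" "adj v b" "adj a c"
    "b \<noteq> a" "b \<noteq> twin a" "c \<noteq> v" "c \<noteq> twin v"
  shows "\<not> adj b c"
proof -
  have at_v: "(up a v \<and> up v b) \<or> (up v a \<and> up b v)"
    using opposite_sides[OF assms(1,2,3,5,6,8,9)] .
  have "adj a v" using assms(5) adj_def by blast
  then have at_a: "(up v a \<and> up a c) \<or> (up a v \<and> up c a)"
    using opposite_sides[OF assms(2,1,4) _ assms(7,10,11)] by blast
  have "\<not> (up v a \<and> up a v)" using up_asym[OF assms(1,2)] by blast
  then have "(up b v \<and> up v a \<and> up a c) \<or> (up c a \<and> up a v \<and> up v b)"
    using at_v at_a by blast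
  then show ?thesis
    using up3_not_adj[OF n_ne_4 assms(3,1,2,4)] up3_not_adj[OF n_ne_4 assms(4,2,1,3)] adj_def
      by blast
qed

lemma twin_corner_other_face:
  assumes f: "f \<in> F" "{v, a} \<in> f" "{v, twin a} \<in> f" and g: "g \<in> F" "g \<noteq> f" "{v, a} \<in> g"
  shows "card g \<noteq> 4"
proof
  assume card_g: "card g = 4"
  have V: "v \<in> V" "a \<in> V" "adj v a" using face_edge_adj[OF f(1,2)] by auto
  obtain \<sigma> where \<sigma>: "aut \<sigma>" "\<sigma> v = a" "\<sigma> a = v"
    using edge_reflection[OF f(1,2)] by metis
  have \<sigma>_g: "face_image \<sigma> g = g"
    using aut_fixes_face_at_fixed_edge[OF \<sigma>(1) g(1,3)] \<sigma>(2,3) by auto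
  have "v \<in> \<Union> g" using g(3) by blast
  then obtain d where d: "d \<in> g" "v \<in> d" "d \<noteq> {v, a}"
    by (rule cycle_two_edges_at_vertex[OF face_cycle[OF g(1)]]) metis
  obtain b where b: "d = {v, b}" "b \<in> V" "adj v b"
    using edge_other_end[OF _ d(2)] d(1) g(1) face_subset_E by blast
  have "b \<noteq> a" using d(3) b(1) by blast
  have "b \<noteq> twin a"
    using no_shared_corner[OF f(1) g(1) g(2)[symmetric], of "{v, a}" "{v, twin a}" v] f g d b
      twin_neq by (auto simp: doubleton_eq_iff)
  have path: "{b, v} \<in> g" "{v, a} \<in> g" "{a, \<sigma> b} \<in> g"
    using d(1) b(1) g(3) face_image_in[of "{v, b}" g \<sigma>] \<sigma>_g \<sigma>(2)
      by (auto simp: insert_commute)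
  have "\<sigma> b \<in> V" "adj a (\<sigma> b)" using face_edge_adj[OF g(1) path(3)] by auto
  have "\<sigma> b \<noteq> v"
    using aut_inj[OF \<sigma>(1) b(2) V(2)] \<sigma>(3) \<open>b \<noteq> a\<close> by simp
  have "\<sigma> b \<noteq> twin v"
    using aut_inj[OF \<sigma>(1) b(2) twin_in_V[OF V(2)]] aut_twin[OF \<sigma>(1) V(2)] \<sigma>(3) \<open>b \<noteq> twin a\<close> by simp
  have not_adj: "\<not> adj b (\<sigma> b)"
    using not_adj_across_two_corners[OF V(1,2) b(2) \<open>\<sigma> b \<in> V\<close> V(3) b(3) \<open>adj a (\<sigma> b)\<close>]
      \<open>b \<noteq> a\<close> \<open>b \<noteq> twin a\<close> \<open>\<sigma> b \<noteq> v\<close> \<open>\<sigma> b \<noteq> twin v\<close> by blast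
  have "b \<noteq> v" "v \<noteq> a" "a \<noteq> \<sigma> b"
    using adj_neq V b \<open>adj a (\<sigma> b)\<close> by blast+
  show False
  proof (cases "\<sigma> b = b")
    case True
    then have "distinct [b, v, a]"
      using \<open>b \<noteq> v\<close> \<open>v \<noteq> a\<close> \<open>a \<noteq> \<sigma> b\<close>
        by auto
    then have "{{b, v}, {v, a}, {a, b}} = g"
      using cycle_subset_eq[OF face_cycle[OF g(1)] is_cycle_edges_triangle] path True by auto
    then have "card g = card {b, v, a}"
      using card_cycle_vertices[OF face_cycle[OF g(1)]]
        by (metis Union_insert Union_empty Un_insert_left
          Un_insert_right sup_bot.right_neutral insert_absorb2 insert_commute)
    then show False using card_g \<open>distinct [b, v, a]\<close> by simp
  next
    case False
    then have "distinct [b, v, a, \<sigma> b]"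
      using \<open>b \<noteq> v\<close> \<open>v \<noteq> a\<close> \<open>a \<noteq> \<sigma> b\<close> \<open>b \<noteq> a\<close> \<open>\<sigma> b \<noteq> v\<close> by auto
    then have "{\<sigma> b, b} \<in> g" using four_cycle_closes_path[OF face_cycle[OF g(1)] card_g path]
      by blast
    then show False using face_edge_adj[OF g(1)] not_adj adj_def by blast
  qed
qed

end

section \<open>Maps without twin corners\<close>

fun twist_seq :: "bool \<Rightarrow> bool \<Rightarrow> bool \<Rightarrow> bool \<Rightarrow> nat \<Rightarrow> bool" where
  "twist_seq t e d0 d1 0 = d0"
| "twist_seq t e d0 d1 (Suc k) = twist_seq t e d1 (e \<noteq> ((t \<and> d1) \<noteq> d0)) k"

lemma twist_seq_add:
  "twist_seq t e d0 d1 (m + k)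
    = twist_seq t e (twist_seq t e d0 d1 m) (twist_seq t e d0 d1 (Suc m)) k"
proof (induction m arbitrary: d0 d1)
  case (Suc m)
  show ?case using Suc.IH[of d1 "e \<noteq> ((t \<and> d1) \<noteq> d0)"] by simp
qed simp

lemma twist_seq_eqI:
  assumes "\<And>k. g (Suc (Suc k)) = (e \<noteq> ((t \<and> g (Suc k)) \<noteq> g k))"
  shows "g k = twist_seq t e (g 0) (g 1) k"
  using assms
proof (induction k arbitrary: g)
  case (Suc k)
  have "g (Suc k) = twist_seq t e ((g \<circ> Suc) 0) ((g \<circ> Suc) 1) k"
    using Suc.IH[of "g \<circ> Suc"] Suc.prems by simp
  also have "\<dots> = twist_seq t e (g 0) (g 1) (Suc k)" using Suc.prems[of 0] by simp
  finally show ?case .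
qed simp

lemma periodic_mod:
  fixes f :: "nat \<Rightarrow> 'a"
  assumes "\<And>k. f (p + k) = f k"
  shows "f k = f (k mod p)"
proof -
  have "f (p * q + r) = f r" for q r
  proof (induction q)
    case (Suc q)
    then show ?case using assms[of "p * q + r"] by (simp add: add.assoc)
  qed simp
  then show ?thesis by (metis div_mult_mod_eq mult.commute)
qed

lemma twist_seq_dvd:
  assumes A: "\<not> twist_seq t True False False n" and B: "twist_seq t False True False n"
    and C: "\<not> twist_seq t False False True n"
  shows "if t then 3 dvd n else 4 dvd n"
proof (cases t)
  case True
  have period: "twist_seq True e d0 d1 (3 + k) = twist_seq True e d0 d1 k" for e d0 d1 k
  proof -
    have "twist_seq True e d0 d1 3 = d0 \<and> twist_seq True e d0 d1 (Suc 3) = d1"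
      by (cases e; cases d0; cases d1) (simp_all add: numeral_eq_Suc)
    then show ?thesis using twist_seq_add[of True e d0 d1 3 k] by simp
  qed
  have "\<not> twist_seq True False False True (n mod 3)"
    using C True periodic_mod[of "twist_seq True False False True" 3, OF period] by simp
  moreover have "n mod 3 = 0 \<or> n mod 3 = 1 \<or> n mod 3 = 2" by linarith
  ultimately have "n mod 3 = 0" by (auto simp: numeral_2_eq_2)
  then show ?thesis using True by presburger
next
  case False
  have period: "twist_seq False e d0 d1 (4 + k) = twist_seq False e d0 d1 k" for e d0 d1 k
  proof -
    have "twist_seq False e d0 d1 4 = d0 \<and> twist_seq False e d0 d1 (Suc 4) = d1"
      by (cases e; cases d0; cases d1) (simp_all add: numeral_eq_Suc)
    then show ?thesis using twist_seq_add[of False e d0 d1 4 k] by simp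
  qed
  have "\<not> twist_seq False True False False (n mod 4)" "twist_seq False False True False (n mod 4)"
    using A B False periodic_mod[of "twist_seq False True False False" 4, OF period]
      periodic_mod[of "twist_seq False False True False" 4, OF period] by simp_all
  moreover have "n mod 4 = 0 \<or> n mod 4 = 1 \<or> n mod 4 = 2 \<or> n mod 4 = 3" by linarith
  ultimately have "n mod 4 = 0" by (auto simp: numeral_2_eq_2 numeral_3_eq_3)
  then show ?thesis using False by presburger
qed

locale rose_window_map_without_twin_corners = rose_window_map +
  assumes no_twin_corner: "f \<in> F \<Longrightarrow> {v, a} \<in> f \<Longrightarrow> {v, twin a} \<notin> f"
begin

definition face_next :: "bool \<Rightarrow> bool \<times> nat \<Rightarrow> bool \<times> nat \<Rightarrow> bool \<times> nat" where
  "face_next c w u = (THE z. z \<noteq> u \<and> {w, z} \<in> face_of_colour c {w, u})"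

lemma face_next:
  assumes "w \<in> V" "u \<in> V" "adj w u"
  shows "face_next c w u \<noteq> u" "{w, face_next c w u} \<in> face_of_colour c {w, u}"
    and face_next_unique: "z \<noteq> u \<Longrightarrow> {w, z} \<in> face_of_colour c {w, u} \<Longrightarrow> z = face_next c w u"
proof -
  have "{w, u} \<in> E" using edge_iff_adj[OF assms(1,2)] assms(3) by simp
  then have "face_of_colour c {w, u} \<in> F" "{w, u} \<in> face_of_colour c {w, u}"
    using face_of_colour by auto
  then have ex1: "\<exists>!z. z \<noteq> u \<and> {w, z} \<in> face_of_colour c {w, u}"
    by (intro cycle_ex1_other_neighbour face_cycle)
  have "face_next c w u \<noteq> u \<and> {w, face_next c w u} \<in> face_of_colour c {w, u}"
    unfolding face_next_def by (rule theI'[OF ex1])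
  then show "face_next c w u \<noteq> u" "{w, face_next c w u} \<in> face_of_colour c {w, u}" by auto
  show "z \<noteq> u \<Longrightarrow> {w, z} \<in> face_of_colour c {w, u} \<Longrightarrow> z = face_next c w u"
    unfolding face_next_def by (rule the1_equality[OF ex1, symmetric]) simp
qed

lemma face_next_adj:
  assumes "w \<in> V" "u \<in> V" "adj w u"
  shows "face_next c w u \<in> V" "adj w (face_next c w u)"
proof -
  have "{w, u} \<in> E" using edge_iff_adj[OF assms(1,2)] assms(3) by simp
  then have "face_of_colour c {w, u} \<in> F" using face_of_colour by blast
  then show "face_next c w u \<in> V" "adj w (face_next c w u)"
    using face_edge_adj face_next(2)[OF assms, where c = c] by blast+
qed

lemma face_next_face_next:
  assumes "w \<in> V" "u \<in> V" "adj w u"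
  shows "face_next c w (face_next c w u) = u"
proof -
  define z where "z = face_next c w u"
  have z: "z \<in> V" "adj w z" "z \<noteq> u" "{w, z} \<in> face_of_colour c {w, u}"
    using face_next_adj[OF assms] face_next[OF assms] unfolding z_def by auto
  have "{w, u} \<in> E" using edge_iff_adj[OF assms(1,2)] assms(3) by simp
  then have "face_of_colour c {w, z} = face_of_colour c {w, u}" using face_of_colour_at_edge z(4)
    by blast
  moreover have "{w, u} \<in> face_of_colour c {w, u}" using face_of_colour \<open>{w, u} \<in> E\<close>
    by blast
  ultimately show ?thesis using face_next_unique[OF assms(1) z(1,2)] z(3) unfolding z_def by metis
qed

lemma face_next_neq_twin:
  assumes "w \<in> V" "u \<in> V" "adj w u"
  shows "face_next c w u \<noteq> twin u"
proof
  assume "face_next c w u = twin u"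
  then have "{w, twin u} \<in> face_of_colour c {w, u}" using face_next(2)[OF assms, where c = c]
    by simp
  moreover have "{w, u} \<in> E" using edge_iff_adj[OF assms(1,2)] assms(3) by simp
  ultimately show False using no_twin_corner face_of_colour by blast
qed

lemma face_next_opposite_side:
  assumes "w \<in> V" "u \<in> V" "adj w u"
  shows "(up u w \<and> up w (face_next c w u)) \<or> (up w u \<and> up (face_next c w u) w)"
  using opposite_sides[OF assms(1,2) face_next_adj(1)[OF assms] assms(3) face_next_adj(2)[OF assms]
      face_next(1)[OF assms, where c = c] face_next_neq_twin[OF assms]] .

lemma face_next_other_colour:
  assumes "w \<in> V" "u \<in> V" "adj w u"
  shows "face_next (\<not> c) w u = twin (face_next c w u)"
proof -
  define z1 z2 where "z1 = face_next c w u" and "z2 = face_next (\<not> c) w u"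
  have "z1 \<in> V" "z2 \<in> V" using face_next_adj(1)[OF assms] unfolding z1_def z2_def by auto
  then have "z2 = z1 \<or> z2 = twin z1"
    using same_side_cases[OF assms(1,2)] face_next_opposite_side[OF assms] unfolding z1_def z2_def
      by blast
  moreover have "z2 \<noteq> z1"
  proof
    assume "z2 = z1"
    have "{w, u} \<in> E" using edge_iff_adj[OF assms(1,2)] assms(3) by simp
    then have f: "face_of_colour c {w, u} \<in> F" "{w, u} \<in> face_of_colour c {w, u}"
        "face_of_colour (\<not> c) {w, u} \<in> F" "{w, u} \<in> face_of_colour (\<not> c) {w, u}"
        "face_of_colour c {w, u} \<noteq> face_of_colour (\<not> c) {w, u}"
      using face_of_colour[of "{w, u}" c] face_of_colour[of "{w, u}" "\<not> c"] by auto
    have "{w, z1} \<in> face_of_colour c {w, u}" "{w, z1} \<in> face_of_colour (\<not> c) {w, u}"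
      using face_next(2)[OF assms, where c = c] face_next(2)[OF assms, where c = "\<not> c"] \<open>z2 = z1\<close>
      unfolding z1_def z2_def by simp_all
    moreover have "{w, u} \<noteq> {w, z1}" using face_next(1)[OF assms, where c = c] unfolding z1_def
      by (auto simp: doubleton_eq_iff)
    ultimately show False using no_shared_corner[OF f(1,3,5), of "{w, u}" "{w, z1}" w] f(2,4)
      by simp
  qed
  ultimately show ?thesis unfolding z1_def z2_def by blast
qed

lemma face_next_twin:
  assumes "w \<in> V" "u \<in> V" "adj w u"
  shows "face_next c w (twin u) = twin (face_next c w u)"
proof -
  have tu: "twin u \<in> V" "adj w (twin u)" using twin_in_V adj_twin assms by auto
  define z1 z3 where "z1 = face_next c w u" and "z3 = face_next c w (twin u)"
  have "z1 \<in> V" "z3 \<in> V" using face_next_adj(1) assms tu unfolding z1_def z3_def by auto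
  moreover have "(up u w \<and> up w z3) \<or> (up w u \<and> up z3 w)"
    using face_next_opposite_side[OF assms(1) tu] block_twin assms(2) unfolding z3_def up_def
      by auto
  ultimately have "z3 = z1 \<or> z3 = twin z1"
    using same_side_cases[OF assms(1,2)] face_next_opposite_side[OF assms] unfolding z1_def by blast
  moreover have "z3 \<noteq> z1"
  proof
    assume "z3 = z1"
    have E: "{w, u} \<in> E" "{w, twin u} \<in> E" using edge_iff_adj assms tu by auto
    have "{w, z1} \<in> face_of_colour c {w, u}" "{w, z1} \<in> face_of_colour c {w, twin u}"
      using face_next(2)[OF assms, where c = c] face_next(2)[OF assms(1) tu, where c = c] \<open>z3 = z1\<close>
        unfolding z1_def z3_def by auto
    then have "face_of_colour c {w, twin u} = face_of_colour c {w, u}"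
      using face_of_colour_at_edge E by metis
    then have "{w, twin u} \<in> face_of_colour c {w, u}" using face_of_colour[OF E(2)] by metis
    then show False using no_twin_corner face_of_colour[OF E(1)] by blast
  qed
  ultimately show ?thesis unfolding z1_def z3_def by blast
qed

lemma face_next_at_twin_cases:
  assumes "w \<in> V" "u \<in> V" "adj w u"
  shows "face_next c (twin w) u = face_next c w u \<or> face_next c (twin w) u = twin (face_next c w u)"
proof -
  have tw: "twin w \<in> V" "adj (twin w) u" using twin_in_V adj_twin assms by auto
  have "face_next c w u \<in> V" "face_next c (twin w) u \<in> V" using face_next_adj(1) assms tw by auto
  moreover have
    "(up u w \<and> up w (face_next c (twin w) u)) \<or> (up w u \<and> up (face_next c (twin w) u) w)"
    using face_next_opposite_side[OF tw(1) assms(2) tw(2)] block_twin assms(1) unfolding up_def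
      by auto
  ultimately show ?thesis using same_side_cases[OF assms(1,2)] face_next_opposite_side[OF assms]
    by blast
qed

lemma face_next_aut:
  assumes "aut \<sigma>" "w \<in> V" "u \<in> V" "adj w u"
  shows "face_next c (\<sigma> w) (\<sigma> u) = \<sigma> (face_next c w u)"
proof -
  have E: "{w, u} \<in> E" using edge_iff_adj[OF assms(2,3)] assms(4) by simp
  define f where "f = face_of_colour c {w, u}"
  have f: "f \<in> F" "{w, u} \<in> f" "colour f = c" using face_of_colour[OF E] f_def by auto
  have \<sigma>: "\<sigma> w \<in> V" "\<sigma> u \<in> V" "adj (\<sigma> w) (\<sigma> u)"
    using aut_in_V aut_adj assms by auto
  have image_f: "face_image \<sigma> f \<in> F" "{\<sigma> w, \<sigma> u} \<in> face_image \<sigma> f"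
    using aut_face[OF assms(1) f(1)] face_image_in[OF f(2), of \<sigma>] by auto
  have "colour (face_image \<sigma> f) = c" using colour_face_image[OF assms(1) f(1)] f(3) by simp
  then have image: "face_of_colour c {\<sigma> w, \<sigma> u} = face_image \<sigma> f"
    using face_of_colour_eq[OF image_f] by simp
  define z where "z = face_next c w u"
  have "z \<in> V" using face_next_adj(1)[OF assms(2-4)] z_def by simp
  have "{w, z} \<in> f" using face_next(2)[OF assms(2-4), where c = c] z_def f_def by simp
  then have "{\<sigma> w, \<sigma> z} \<in> face_of_colour c {\<sigma> w, \<sigma> u}"
    using face_image_in[of "{w, z}" f \<sigma>] image by simp
  moreover have "\<sigma> z \<noteq> \<sigma> u"
    using aut_inj[OF assms(1) \<open>z \<in> V\<close> assms(3)] face_next(1)[OF assms(2-4), where c = c] z_def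
      by simp
  ultimately have "\<sigma> z = face_next c (\<sigma> w) (\<sigma> u)"
    by (intro face_next_unique[OF \<sigma>])
  then show ?thesis using z_def by simp
qed

definition twisted :: "bool \<times> nat \<Rightarrow> bool \<Rightarrow> bool \<times> nat \<Rightarrow> bool" where
  "twisted w c u \<longleftrightarrow> face_next c (twin w) u \<noteq> face_next c w u"

lemma twisted_other_colour:
  assumes "w \<in> V" "u \<in> V" "adj w u"
  shows "twisted w (\<not> c) u = twisted w c u"
proof -
  have tw: "twin w \<in> V" "adj (twin w) u" using twin_in_V adj_twin assms by auto
  show ?thesis
    unfolding twisted_def face_next_other_colour[OF tw(1) assms(2) tw(2)]
      face_next_other_colour[OF assms]
    using twin_eq_iff face_next_adj(1) assms tw by simp
qed

lemma twisted_twin: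
  assumes "w \<in> V" "u \<in> V" "adj w u"
  shows "twisted w c (twin u) = twisted w c u"
proof -
  have tw: "twin w \<in> V" "adj (twin w) u" using twin_in_V adj_twin assms by auto
  show ?thesis
    unfolding twisted_def face_next_twin[OF tw(1) assms(2) tw(2)] face_next_twin[OF assms]
    using twin_eq_iff face_next_adj(1) assms tw by simp
qed

lemma twisted_face_next:
  assumes "w \<in> V" "u \<in> V" "adj w u"
  shows "twisted w c (face_next c w u) = twisted w c u"
proof -
  have tw: "twin w \<in> V" "adj (twin w) u" using twin_in_V adj_twin assms by auto
  define z y where "z = face_next c w u" and "y = face_next c (twin w) u"
  have z: "z \<in> V" "adj w z" "face_next c w z = u" and y: "face_next c (twin w) y = u"
    using face_next_adj[OF assms] face_next_face_next[OF assms]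
      face_next_face_next[OF tw(1) assms(2) tw(2)]
    unfolding z_def y_def by auto
  have "y = z \<or> y = twin z" using face_next_at_twin_cases[OF assms] unfolding z_def y_def .
  then show ?thesis
  proof
    assume "y = z"
    then show ?thesis using y z(3) unfolding twisted_def y_def z_def by simp
  next
    assume "y = twin z"
    have tz: "twin z \<in> V" "adj (twin w) z" using twin_in_V z adj_twin assms(1) by auto
    have "twin (face_next c (twin w) z) = u"
      using y face_next_twin[OF tw(1) z(1) tz(2)] \<open>y = twin z\<close> by simp
    then have "face_next c (twin w) z = twin u"
      using twin_twin face_next_adj(1)[OF tw(1) z(1) tz(2)]
      by metis
    then have "face_next c (twin w) z \<noteq> face_next c w z" using z(3) twin_neq by metis
    moreover have "y \<noteq> z" using \<open>y = twin z\<close> twin_neq by metis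
    ultimately show ?thesis unfolding twisted_def z_def[symmetric] y_def[symmetric] by simp
  qed
qed

lemma neighbour_cases:
  assumes "w \<in> V" "u \<in> V" "adj w u" "u' \<in> V" "adj w u'"
  shows "u' = u \<or> u' = twin u \<or> u' = face_next c w u \<or> u' = twin (face_next c w u)"
proof -
  have z: "face_next c w u \<in> V" using face_next_adj assms by blast
  have side: "(up u w \<and> up w (face_next c w u)) \<or> (up w u \<and> up (face_next c w u) w)"
    using face_next_opposite_side[OF assms(1-3)] .
  consider "up w u'" | "up u' w" using assms(5) adj_def by blast
  then show ?thesis
  proof cases
    case 1
    then have "up w u \<or> up w (face_next c w u)" using side up_asym assms(1,2) by blast
    then show ?thesis using up_targets[OF assms(1) _ assms(4)] 1 assms(2) z by blast
  next
    case 2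
    then have "up u w \<or> up (face_next c w u) w" using side assms(3) adj_def by blast
    then show ?thesis using up_sources[OF assms(1) _ assms(4)] 2 assms(2) z by blast
  qed
qed

lemma twisted_local:
  assumes "w \<in> V" "u \<in> V" "adj w u" "u' \<in> V" "adj w u'"
  shows "twisted w c' u' = twisted w c u"
proof -
  have z: "face_next c w u \<in> V" "adj w (face_next c w u)" using face_next_adj assms by auto
  have "twisted w c u' = twisted w c u"
    using neighbour_cases[OF assms, of c] twisted_twin[OF assms(1-3)]
      twisted_face_next[OF assms(1-3)]
      twisted_twin[OF assms(1) z] by metis
  moreover have "twisted w c' u' = twisted w c u'"
    using twisted_other_colour[OF assms(1,4,5)] by (cases "c' = c") auto
  ultimately show ?thesis by simp
qed

lemma twisted_aut:
  assumes "aut \<sigma>" "w \<in> V" "u \<in> V" "adj w u"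
  shows "twisted (\<sigma> w) c (\<sigma> u) = twisted w c u"
proof -
  have tw: "twin w \<in> V" "adj (twin w) u" using twin_in_V adj_twin assms by auto
  have "face_next c (twin (\<sigma> w)) (\<sigma> u) = \<sigma> (face_next c (twin w) u)"
    using aut_twin[OF assms(1,2)] face_next_aut[OF assms(1) tw(1) assms(3) tw(2)] by simp
  moreover have "face_next c (\<sigma> w) (\<sigma> u) = \<sigma> (face_next c w u)"
    using face_next_aut[OF assms] .
  moreover have "face_next c (twin w) u \<in> V" "face_next c w u \<in> V"
    using face_next_adj(1) assms(2-4) tw by auto
  ultimately show ?thesis unfolding twisted_def using aut_inj[OF assms(1)] by simp
qed

definition twist :: bool where
  "twist = twisted (True, 0) True (up_y (True, 0))"

lemma twisted_eq_twist:
  assumes "w \<in> V" "u \<in> V" "adj w u"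
  shows "twisted w c u = twist"
proof -
  define w\<^sub>0 where "w\<^sub>0 = (True, 0::nat)"
  have w\<^sub>0: "w\<^sub>0 \<in> V" "up_y w\<^sub>0 \<in> V" "adj w\<^sub>0 (up_y w\<^sub>0)"
    using n_pos up_y_in_V up_up_y adj_def unfolding w\<^sub>0_def in_V_iff by auto
  obtain \<sigma> where \<sigma>: "aut \<sigma>" "\<sigma> w\<^sub>0 = w"
    using vertex_transitive[OF w\<^sub>0(1) assms(1)] by blast
  obtain x where x: "x \<in> V" "\<sigma> x = u" using aut_surj[OF \<sigma>(1) assms(2)] by blast
  have "adj w\<^sub>0 x" using aut_adj[OF \<sigma>(1) w\<^sub>0(1) x(1)] \<sigma>(2) x(2) assms(3)
    by simp
  then have "twisted w c u = twisted w\<^sub>0 c x"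
    using twisted_aut[OF \<sigma>(1) w\<^sub>0(1) x(1)] \<sigma>(2) x(2) by simp
  also have "\<dots> = twist" unfolding twist_def w\<^sub>0_def[symmetric]
    using twisted_local[OF w\<^sub>0 x(1)] \<open>adj w\<^sub>0 x\<close> by simp
  finally show ?thesis .
qed

lemma face_next_at_twin:
  assumes "w \<in> V" "u \<in> V" "adj w u"
  shows "face_next c (twin w) u = twin_if twist (face_next c w u)"
  using face_next_at_twin_cases[OF assms, of c] twisted_eq_twist[OF assms, of c]
  unfolding twisted_def twin_if_def by auto

lemma face_next_twin_if:
  assumes "w \<in> V" "u \<in> V" "adj w u"
  shows "face_next c' (twin_if a w) (twin_if b u)
    = twin_if ((c \<noteq> c') \<noteq> ((twist \<and> a) \<noteq> b)) (face_next c w u)"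
proof -
  have aw: "twin_if a w \<in> V" "adj (twin_if a w) u"
    using twin_if_in_V adj_twin_if[OF assms(1,2), of a False] assms by (auto simp: twin_if_def)
  have z: "face_next c w u \<in> V" using face_next_adj assms by blast
  have "face_next c' (twin_if a w) (twin_if b u) = twin_if b (face_next c' (twin_if a w) u)"
    using face_next_twin[OF aw(1) assms(2) aw(2)] by (simp add: twin_if_def)
  also have "face_next c' (twin_if a w) u = twin_if (twist \<and> a) (face_next c' w u)"
    using face_next_at_twin[OF assms] by (cases a) (auto simp: twin_if_def)
  also have "face_next c' w u = twin_if (c \<noteq> c') (face_next c w u)"
    using face_next_other_colour[OF assms, of c] by (cases "c = c'") (auto simp: twin_if_def)
  finally show ?thesis using twin_if_twin_if z twin_if_in_V
    by (cases b; cases "twist \<and> a"; cases "c = c'") auto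
qed

subsection \<open>Walks along faces\<close>

fun face_walk :: "bool \<Rightarrow> bool \<times> nat \<Rightarrow> bool \<times> nat \<Rightarrow> nat \<Rightarrow> bool \<times> nat" where
  "face_walk c u w 0 = u"
| "face_walk c u w (Suc k) = face_walk c w (face_next c w u) k"

lemma face_walk_Suc_0 [simp]: "face_walk c u w (Suc 0) = w"
  by simp

lemma face_walk_in_V_adj:
  assumes "u \<in> V" "w \<in> V" "adj u w"
  shows "face_walk c u w k \<in> V \<and> adj (face_walk c u w k) (face_walk c u w (Suc k))"
  using assms
proof (induction k arbitrary: u w)
  case (Suc k)
  have "adj w u" using Suc.prems(3) adj_sym by blast
  then show ?case using Suc.IH[OF Suc.prems(2) face_next_adj[OF Suc.prems(2,1)]] by simp
qed simp

lemmas face_walk_adj = face_walk_in_V_adj[THEN conjunct1] face_walk_in_V_adj[THEN conjunct2]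

lemma face_walk_Suc_Suc:
  assumes "u \<in> V" "w \<in> V" "adj u w"
  shows "face_walk c u w (Suc (Suc k)) = face_next c (face_walk c u w (Suc k)) (face_walk c u w k)"
  using assms
proof (induction k arbitrary: u w)
  case (Suc k)
  have "adj w u" using Suc.prems(3) adj_sym by blast
  then show ?case using Suc.IH[OF Suc.prems(2) face_next_adj[OF Suc.prems(2,1)]] by simp
qed simp

lemma face_walk_add:
  "face_walk c u w (m + k) = face_walk c (face_walk c u w m) (face_walk c u w (Suc m)) k"
proof (induction m arbitrary: u w)
  case (Suc m)
  show ?case using Suc.IH[of w "face_next c w u"] by simp
qed simp

lemma face_walk_up:
  assumes "u \<in> V" "w \<in> V" "up u w"
  shows "up (face_walk c u w k) (face_walk c u w (Suc k))"
  using assms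
proof (induction k arbitrary: u w)
  case (Suc k)
  have "adj w u" using Suc.prems(3) adj_def by blast
  then have "up w (face_next c w u)"
    using face_next_opposite_side[OF Suc.prems(2,1)] Suc.prems up_asym by blast
  then show ?case using Suc.IH[OF Suc.prems(2) face_next_adj(1)[OF Suc.prems(2,1) \<open>adj w u\<close>]]
    by simp
qed simp

lemma face_walk_edge:
  assumes "u \<in> V" "w \<in> V" "adj u w"
  shows "{face_walk c u w k, face_walk c u w (Suc k)} \<in> face_of_colour c {u, w}"
  using assms
proof (induction k arbitrary: u w)
  case 0
  then have "{u, w} \<in> E" using edge_iff_adj by blast
  then show ?case using face_of_colour by simp
next
  case (Suc k)
  have "adj w u" using Suc.prems(3) adj_sym by blast
  then have "{w, u} \<in> E" using edge_iff_adj Suc.prems(1,2) by blast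
  then have "face_of_colour c {w, face_next c w u} = face_of_colour c {u, w}"
    using face_of_colour_at_edge face_next(2)[OF Suc.prems(2,1) \<open>adj w u\<close>, where c = c]
    by (metis insert_commute)
  then show ?case
    using Suc.IH[OF Suc.prems(2) face_next_adj[OF Suc.prems(2,1) \<open>adj w u\<close>, where c = c]] by simp
qed

declare face_walk.simps(2) [simp del]

lemma face_walk_period_add:
  assumes "face_walk c u w p = u" "face_walk c u w (Suc p) = w"
  shows "face_walk c u w (p + k) = face_walk c u w k"
  using face_walk_add[of c u w p k] assms by simp

context
  fixes c :: bool and u w :: "bool \<times> nat"
  assumes u: "u \<in> V" and w: "w \<in> V" and up_u_w: "up u w"
begin

private lemma adj_u_w: "adj u w"
  using up_u_w adj_def by blast

private lemma walk_in_V: "face_walk c u w k \<in> V"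
  using face_walk_adj(1)[OF u w adj_u_w] .

private lemma walk_edge: "{face_walk c u w k, face_walk c u w (Suc k)} \<in> face_of_colour c {u, w}"
  using face_walk_edge[OF u w adj_u_w] .

private lemma face: "face_of_colour c {u, w} \<in> F" "{u, w} \<in> face_of_colour c {u, w}"
  using face_of_colour edge_iff_adj u w adj_u_w by blast+

lemma block_face_walk: "block (face_walk c u w k) = (block u + int k) mod int n"
proof (induction k)
  case 0
  show ?case using block_mod[OF u] by simp
next
  case (Suc k)
  have "block (face_walk c u w (Suc k)) = (block (face_walk c u w k) + 1) mod int n"
    using face_walk_up[OF u w up_u_w, of c k] by (simp add: up_def)
  also have "\<dots> = (block u + int k + 1) mod int n" using Suc by (simp add: mod_add_left_eq)
  also have "\<dots> = (block u + int (Suc k)) mod int n" by (simp add: algebra_simps)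
  finally show ?case .
qed

lemma face_walk_eq_imp_dvd: "face_walk c u w i = face_walk c u w j \<Longrightarrow> int n dvd (int i - int j)"
  using block_face_walk[of i] block_face_walk[of j] by (auto simp: mod_eq_dvd_iff dvd_diff_commute)

lemma face_walk_n: "face_walk c u w n = u \<or> face_walk c u w n = twin u"
  using same_block[OF u walk_in_V] block_face_walk[of n] block_mod[OF u] by simp

lemma face_walk_periodic:
  obtains p where "p > 0" "face_walk c u w p = u" "face_walk c u w (Suc p) = w"
proof -
  define h where "h k = (face_walk c u w k, face_walk c u w (Suc k))" for k
  have "range h \<subseteq> V \<times> V" using walk_in_V unfolding h_def by auto
  then have "finite (range h)" using finite_V by (meson finite_SigmaI finite_subset)
  then have "\<not> inj h" using finite_imageD infinite_UNIV_nat by blast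
  then have "\<exists>a b. a < b \<and> h a = h b" unfolding inj_def by (metis linorder_neqE_nat)
  then obtain a b where ab: "a < b" "h a = h b" by blast
  have walk_back:
    "face_walk c u w k = face_next c (face_walk c u w (Suc k)) (face_walk c u w (Suc (Suc k)))" for k
  proof -
    have "adj (face_walk c u w (Suc k)) (face_walk c u w k)"
      using face_walk_adj(2)[OF u w adj_u_w] adj_sym by blast
    then show ?thesis
      using face_next_face_next[OF walk_in_V walk_in_V] face_walk_Suc_Suc[OF u w adj_u_w] by simp
  qed
  have h_Suc: "h k = h l" if "h (Suc k) = h (Suc l)" for k l
    using walk_back[of k] walk_back[of l] that unfolding h_def by simp
  have "h (a - m) = h (b - m)" if "m \<le> a" for m
    using that
  proof (induction m)
    case (Suc m)
    then have "h (Suc (a - Suc m)) = h (Suc (b - Suc m))" using ab(1) by (simp add: Suc_diff_Suc)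
    then show ?case by (rule h_Suc)
  qed (use ab in simp)
  then have "h 0 = h (b - a)" by (metis diff_self_eq_0 order_refl)
  then show ?thesis using that[of "b - a"] ab(1) unfolding h_def by simp
qed

lemma face_edge_at_walk_vertex:
  assumes "e \<in> face_of_colour c {u, w}" "face_walk c u w k \<in> e"
  shows "\<exists>m. e = {face_walk c u w m, face_walk c u w (Suc m)}"
proof -
  obtain p where p: "p > 0" "face_walk c u w p = u" "face_walk c u w (Suc p) = w"
    by (rule face_walk_periodic)
  define m where "m = p + k - 1"
  have "face_walk c u w k = face_walk c u w (Suc m)" using face_walk_period_add[OF p(2,3)] p(1)
    unfolding m_def by simp
  moreover have "face_walk c u w m \<noteq> face_walk c u w (Suc (Suc m))"
    "face_walk c u w m \<noteq> face_walk c u w (Suc m)"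
    using face_walk_Suc_Suc[OF u w adj_u_w] face_next(1) walk_in_V face_walk_adj(2)[OF u w adj_u_w]
      adj_sym adj_neq by metis+
  then have "{face_walk c u w m, face_walk c u w (Suc m)}
      \<noteq> {face_walk c u w (Suc m), face_walk c u w (Suc (Suc m))}"
    by (auto simp: doubleton_eq_iff)
  ultimately show ?thesis
    using cycle_edge_at_vertex_cases[OF face_cycle[OF face(1)] walk_edge walk_edge] assms by blast
qed

lemma face_vertices_walk: "\<Union> (face_of_colour c {u, w}) = range (face_walk c u w)"
proof
  show "\<Union> (face_of_colour c {u, w}) \<subseteq> range (face_walk c u w)"
  proof (rule cycle_vertices_closed[OF face_cycle[OF face(1)]])
    show "u \<in> range (face_walk c u w)" using face_walk.simps(1) by (metis rangeI)
    show "u \<in> \<Union> (face_of_colour c {u, w})" using face(2) by blast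
    show "e \<subseteq> range (face_walk c u w)"
      if "e \<in> face_of_colour c {u, w}" "x \<in> e" "x \<in> range (face_walk c u w)" for e x
      using face_edge_at_walk_vertex that by blast
  qed
  show "range (face_walk c u w) \<subseteq> \<Union> (face_of_colour c {u, w})" using walk_edge by blast
qed

lemma face_edges_walk:
  "face_of_colour c {u, w} = range (\<lambda>k. {face_walk c u w k, face_walk c u w (Suc k)})"
proof
  show "face_of_colour c {u, w} \<subseteq> range (\<lambda>k. {face_walk c u w k, face_walk c u w (Suc k)})"
  proof
    fix e assume e: "e \<in> face_of_colour c {u, w}"
    then obtain x y where xy: "e = {x, y}" using cycle_edge_doubleton[OF face_cycle[OF face(1)]]
      by blast
    then have "x \<in> range (face_walk c u w)" using e face_vertices_walk by blast
    then obtain k where "face_walk c u w k \<in> e" using xy by auto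
    then show "e \<in> range (\<lambda>k. {face_walk c u w k, face_walk c u w (Suc k)})"
      using face_edge_at_walk_vertex e by blast
  qed
qed (use walk_edge in blast)

lemma face_walk_inj_on: "inj_on (face_walk c u w) {..<n}"
proof
  fix i j assume "i \<in> {..<n}" "j \<in> {..<n}" "face_walk c u w i = face_walk c u w j"
  then have "int n dvd (int i - int j)" "\<bar>int i - int j\<bar> < int n" using face_walk_eq_imp_dvd by auto
  then have "int i - int j = 0" by (rule dvd_small_eq_0)
  then show "i = j" by simp
qed

lemma face_walk_inj_on_atMost:
  assumes "face_walk c u w n \<noteq> u"
  shows "inj_on (face_walk c u w) {..n}"
proof
  fix i j assume ij: "i \<in> {..n}" "j \<in> {..n}" "face_walk c u w i = face_walk c u w j"
  show "i = j"
  proof (rule ccontr)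
    assume "i \<noteq> j"
    then have "\<not> \<bar>int i - int j\<bar> < int n" using face_walk_eq_imp_dvd[OF ij(3)] dvd_small_eq_0
      by fastforce
    then have "(i = 0 \<and> j = n) \<or> (i = n \<and> j = 0)" using ij(1,2) by auto
    then show False using ij(3) assms by auto
  qed
qed

lemma face_walk_Suc_n:
  assumes "face_walk c u w n = u"
  shows "face_walk c u w (Suc n) = w"
proof -
  have "up u (face_walk c u w (Suc n))" using face_walk_up[OF u w up_u_w, of c n] assms by simp
  then have "face_walk c u w (Suc n) = w \<or> face_walk c u w (Suc n) = twin w"
    using up_targets[OF u w walk_in_V up_u_w] by blast
  moreover have "{u, face_walk c u w (Suc n)} \<in> face_of_colour c {u, w}" using walk_edge[of n] assms
    by simp
  moreover have "{u, twin w} \<notin> face_of_colour c {u, w}"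
    using no_twin_corner[OF face] .
  ultimately show ?thesis by auto
qed

lemma range_face_walk:
  assumes "face_walk c u w n = u"
  shows "range (face_walk c u w) = face_walk c u w ` {..<n}"
proof -
  have "face_walk c u w k = face_walk c u w (k mod n)" for k
    using periodic_mod face_walk_period_add[OF assms face_walk_Suc_n[OF assms]] by metis
  moreover have "k mod n \<in> {..<n}" for k using n_pos by simp
  ultimately show ?thesis by (metis image_eqI image_subsetI subset_antisym subset_UNIV image_mono)
qed

lemma card_face_eq_n_iff: "card (face_of_colour c {u, w}) = n \<longleftrightarrow> face_walk c u w n = u"
proof -
  have card: "card (face_of_colour c {u, w}) = card (range (face_walk c u w))"
    using card_cycle_vertices[OF face_cycle[OF face(1)]] face_vertices_walk by simp
  have "finite (range (face_walk c u w))" using walk_in_V finite_V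
    by (metis finite_subset image_subsetI)
  then have "card (face_walk c u w ` {..n}) \<le> card (range (face_walk c u w))"
    by (rule card_mono) (rule image_mono, simp)
  then have "face_walk c u w n \<noteq> u \<Longrightarrow> card (range (face_walk c u w)) > n"
    using face_walk_inj_on_atMost card_image by fastforce
  moreover have "face_walk c u w n = u \<Longrightarrow> card (range (face_walk c u w)) = n"
    using range_face_walk face_walk_inj_on card_image by fastforce
  ultimately show ?thesis using card by fastforce
qed

end

lemma face_walk_twin_if:
  assumes "u \<in> V" "w \<in> V" "adj u w"
  shows "face_walk c' (twin_if a u) (twin_if b w) k
    = twin_if (twist_seq twist (c \<noteq> c') a b k) (face_walk c u w k)"
  using assms
proof (induction k arbitrary: u w a b)
  case (Suc k)
  have "adj w u" using Suc.prems adj_sym by blast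
  then have next_w: "face_next c w u \<in> V" "adj w (face_next c w u)" using face_next_adj Suc.prems
    by auto
  have "face_next c' (twin_if b w) (twin_if a u)
      = twin_if ((c \<noteq> c') \<noteq> ((twist \<and> b) \<noteq> a)) (face_next c w u)"
    using face_next_twin_if[OF Suc.prems(2,1) \<open>adj w u\<close>] .
  then show ?case using Suc.IH[OF Suc.prems(2) next_w] by (simp add: face_walk.simps)
qed simp

lemma card_faces_differ:
  assumes "u \<in> V" "w \<in> V" "up u w" "u' \<in> V" "w' \<in> V" "up u' w'"
    and "face_walk c' u' w' n = twin_if d (face_walk c u w n)" "u' = twin_if d' u" "d \<noteq> d'"
  shows "card (face_of_colour c {u, w}) \<noteq> card (face_of_colour c' {u', w'})"
proof -
  have twin_u: "twin u \<noteq> u" "twin (twin u) = u" using twin_neq twin_twin[OF assms(1)] by auto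
  have card: "card (face_of_colour c {u, w}) = n \<longleftrightarrow> face_walk c u w n = u"
    "card (face_of_colour c' {u', w'}) = n \<longleftrightarrow> face_walk c' u' w' n = u'"
    using card_face_eq_n_iff[OF assms(1-3)] card_face_eq_n_iff[OF assms(4-6)] by auto
  consider "face_walk c u w n = u" | "face_walk c u w n = twin u" using face_walk_n[OF assms(1-3)]
    by blast
  then show ?thesis
  proof cases
    case 1
    then have "face_walk c' u' w' n \<noteq> u'" using assms(7-9) twin_u unfolding twin_if_def by auto
    then show ?thesis using card 1 by simp
  next
    case 2
    then have "face_walk c' u' w' n = u'" using assms(7-9) twin_u unfolding twin_if_def by auto
    then show ?thesis using card 2 twin_u by simp
  qed
qed

subsection \<open>Flipping twins periodically\<close>

text \<open>Along every face walk the values of \<open>flipped\<close> satisfy the recurrence of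
  \<open>twist_seq twist True\<close> (which has period 3 if \<open>twist\<close> and 4 otherwise), as long as that period
  divides \<open>n\<close>; this is what makes \<open>block_flip\<close> exchange the two face colours.\<close>

definition flipped :: "bool \<times> nat \<Rightarrow> bool" where
  "flipped x \<longleftrightarrow> (if twist then block x mod 3 = 0 else block x mod 4 \<in> {0, 1})"

definition block_flip :: "bool \<times> nat \<Rightarrow> bool \<times> nat" where
  "block_flip x = (if x \<in> V then twin_if (flipped x) x else x)"

lemma block_flip_in_V: "x \<in> V \<Longrightarrow> block_flip x \<in> V"
  unfolding block_flip_def using twin_if_in_V by simp

lemma block_flip_block_flip:
  assumes "x \<in> V"
  shows "block_flip (block_flip x) = x"
proof -
  have "flipped (twin_if d x) = flipped x" for d unfolding flipped_def using block_twin_if assms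
    by simp
  then have "block_flip (block_flip x) = twin_if (flipped x) (twin_if (flipped x) x)"
    using assms twin_if_in_V unfolding block_flip_def by simp
  then show ?thesis using twin_if_twin_if[OF assms] by (simp add: twin_if_def)
qed

lemma block_block_flip: "x \<in> V \<Longrightarrow> block (block_flip x) = block x"
  unfolding block_flip_def using block_twin_if by simp

lemma up_block_flip: "x \<in> V \<Longrightarrow> y \<in> V \<Longrightarrow> up (block_flip x) (block_flip y) \<longleftrightarrow> up x y"
  unfolding up_def using block_block_flip by simp

lemma adj_block_flip: "x \<in> V \<Longrightarrow> y \<in> V \<Longrightarrow> adj (block_flip x) (block_flip y) \<longleftrightarrow> adj x y"
  unfolding adj_def using up_block_flip by simp

lemma flipped_face_walk:
  assumes "if twist then 3 dvd n else 4 dvd n" "u \<in> V" "w \<in> V" "up u w"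
  shows "flipped (face_walk c u w (Suc (Suc k)))
    = (True \<noteq> ((twist \<and> flipped (face_walk c u w (Suc k))) \<noteq> flipped (face_walk c u w k)))"
proof -
  define x where "x = block u + int k"
  have b: "block (face_walk c u w k) = x mod int n"
    "block (face_walk c u w (Suc k)) = (x + 1) mod int n"
    "block (face_walk c u w (Suc (Suc k))) = (x + 2) mod int n"
    using block_face_walk[OF assms(2-4)] unfolding x_def by (simp_all add: algebra_simps)
  show ?thesis
  proof (cases twist)
    case True
    then have "(3::int) dvd int n" using assms(1) by presburger
    then have "(y mod int n) mod 3 = y mod 3" for y :: int by (rule mod_mod_cancel)
    moreover have "((x + 2) mod 3 = 0) = (((x + 1) mod 3 = 0) = (x mod 3 = 0))" by presburger
    ultimately show ?thesis using True b unfolding flipped_def by simp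
  next
    case False
    then have "(4::int) dvd int n" using assms(1) by presburger
    then have "(y mod int n) mod 4 = y mod 4" for y :: int by (rule mod_mod_cancel)
    moreover have "((x + 2) mod 4 = 0 \<or> (x + 2) mod 4 = 1) \<longleftrightarrow> \<not> (x mod 4 = 0 \<or> x mod 4 = 1)"
      by presburger
    ultimately show ?thesis using False b unfolding flipped_def by simp
  qed
qed

lemma block_flip_face_walk:
  assumes "if twist then 3 dvd n else 4 dvd n" "u \<in> V" "w \<in> V" "up u w"
  shows "block_flip (face_walk c u w k) = face_walk (\<not> c) (block_flip u) (block_flip w) k"
proof -
  have "adj u w" using assms(4) adj_def by blast
  have "flipped (face_walk c u w k)
      = twist_seq twist True (flipped (face_walk c u w 0)) (flipped (face_walk c u w 1)) k"
    by (rule twist_seq_eqI[where g = "\<lambda>k. flipped (face_walk c u w k)"])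
      (rule flipped_face_walk[OF assms])
  then have "flipped (face_walk c u w k) = twist_seq twist True (flipped u) (flipped w) k"
    by simp
  then show ?thesis
    using face_walk_twin_if[OF assms(2,3) \<open>adj u w\<close>, where c = c and c' = "\<not> c" and a = "flipped u"
        and b = "flipped w" and k = k]
      face_walk_adj(1)[OF assms(2,3) \<open>adj u w\<close>] assms(2,3) unfolding block_flip_def by simp
qed

lemma block_flip_face_of_colour:
  assumes "if twist then 3 dvd n else 4 dvd n" "u \<in> V" "w \<in> V" "up u w"
  shows "face_image block_flip (face_of_colour c {u, w})
    = face_of_colour (\<not> c) {block_flip u, block_flip w}"
proof -
  have flip: "block_flip u \<in> V" "block_flip w \<in> V" "up (block_flip u) (block_flip w)"
    using block_flip_in_V up_block_flip assms(2-4) by auto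
  have "face_image block_flip (face_of_colour c {u, w})
      = range (\<lambda>k. {block_flip (face_walk c u w k), block_flip (face_walk c u w (Suc k))})"
    unfolding face_image_def face_edges_walk[OF assms(2-4)] by (auto simp: image_iff)
  also have "\<dots> = face_of_colour (\<not> c) {block_flip u, block_flip w}"
    unfolding face_edges_walk[OF flip] block_flip_face_walk[OF assms] ..
  finally show ?thesis .
qed

lemma block_flip_face:
  assumes "if twist then 3 dvd n else 4 dvd n" "f \<in> F"
  shows "face_image block_flip f \<in> F"
proof -
  obtain e where e: "e \<in> f" using cycle_nonempty[OF face_cycle[OF assms(2)]] by blast
  then have "e \<in> E" using assms(2) face_subset_E by blast
  then obtain x y where "x \<in> V" "y \<in> V" "adj x y" "e = {x, y}" using edge_adj by blast
  then obtain u w where uw: "u \<in> V" "w \<in> V" "up u w" "e = {u, w}"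
    using adj_def by (metis insert_commute)
  have "face_of_colour (colour f) {u, w} = f" using face_of_colour_eq[OF assms(2)] e uw(4) by simp
  then have "face_image block_flip f = face_of_colour (\<not> colour f) {block_flip u, block_flip w}"
    using block_flip_face_of_colour[OF assms(1) uw(1-3)] by metis
  moreover have "{block_flip u, block_flip w} \<in> E"
    using edge_iff_adj block_flip_in_V uw adj_block_flip adj_def by metis
  ultimately show ?thesis using face_of_colour by metis
qed

lemma block_flip_aut:
  assumes "if twist then 3 dvd n else 4 dvd n"
  shows "aut block_flip"
proof -
  have "bij_betw block_flip V V"
    by (rule bij_betw_byWitness[where f' = block_flip])
      (auto simp: block_flip_block_flip block_flip_in_V)
  moreover have "\<forall>u\<in>V. \<forall>v\<in>V. {u, v} \<in> E \<longleftrightarrow> {block_flip u, block_flip v} \<in> E"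
    using edge_iff_adj block_flip_in_V adj_block_flip by metis
  moreover have "face_image block_flip ` F = F"
  proof
    show "face_image block_flip ` F \<subseteq> F" using block_flip_face[OF assms] by blast
    show "F \<subseteq> face_image block_flip ` F"
    proof
      fix f assume f: "f \<in> F"
      have "x \<in> V" if "x \<in> \<Union> f" for x using that face_vertices_subset_V[OF f] by blast
      then have "face_image block_flip (face_image block_flip f) = f"
        unfolding face_image_comp[symmetric]
          by (intro face_image_cong_id) (simp add: block_flip_block_flip)
      then show "f \<in> face_image block_flip ` F" using block_flip_face[OF assms f]
        by (metis image_eqI)
    qed
  qed
  ultimately show ?thesis unfolding map_aut_def face_image_def by blast
qed

lemma not_twist_period_dvd: "\<not> (if twist then 3 dvd n else 4 dvd n)"
proof
  assume period: "if twist then 3 dvd n else 4 dvd n"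
  define i :: nat where "i = (if twist then 1 else 2)"
  define v w where "v = (True, i)" and "w = (True, i + 1)"
  have "i + 1 < n" using n_ge_3 period unfolding i_def by (cases twist) (auto dest: dvd_imp_le)
  then have V: "v \<in> V" "w \<in> V" and "up v w" using n_pos
    unfolding v_def w_def in_V_iff up_def block_def by auto
  then have "{v, w} \<in> E" using edge_iff_adj adj_def by blast
  have "\<not> flipped v" "\<not> flipped w" unfolding flipped_def v_def w_def block_def i_def
    by simp_all
  then have fixed: "block_flip v = v" "block_flip w = w"
    unfolding block_flip_def twin_if_def using V by auto
  define f where "f = face_of_colour True {v, w}"
  have f: "f \<in> F" "{v, w} \<in> f" "colour f"
    using face_of_colour[OF \<open>{v, w} \<in> E\<close>] f_def by auto
  have image: "face_image block_flip f = face_of_colour False {v, w}"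
    using block_flip_face_of_colour[OF period V \<open>up v w\<close>, of True] fixed f_def by simp
  then have g: "face_image block_flip f \<in> F" "{v, w} \<in> face_image block_flip f"
      "face_image block_flip f \<noteq> f"
    using face_of_colour[OF \<open>{v, w} \<in> E\<close>] f(3) by auto
  have "flag_act block_flip (v, {v, w}, f) = (v, {v, w}, face_image block_flip f)"
    using fixed by (simp add: flag_act_Pair)
  then have "(v, {v, w}, face_image block_flip f) \<in> orbit (v, {v, w}, f)"
    using block_flip_aut[OF period] orbit_iff by metis
  moreover have "(v, {v, w}, f) \<in> flags F" "(v, {v, w}, face_image block_flip f) \<in> flags F"
    using f g flags_iff by auto
  ultimately show False using face_flip_not_in_orbit g(3) by blast
qed

lemma twist_seq_n_if_same_lengths:
  assumes same: "\<And>f g. f \<in> F \<Longrightarrow> g \<in> F \<Longrightarrow> card f = card g"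
  shows "\<not> twist_seq twist True False False n" "twist_seq twist False True False n"
    "\<not> twist_seq twist False False True n"
proof -
  define a where "a = (True, 0::nat)"
  define v where "v = up_y a"
  have V: "a \<in> V" "v \<in> V" "twin a \<in> V" "twin v \<in> V"
    and up: "up a v" "up (twin a) v" "up a (twin v)"
    using n_pos up_y_in_V up_up_y up_twin twin_in_V unfolding a_def v_def in_V_iff by auto
  then have E: "{a, v} \<in> E" "{twin a, v} \<in> E" "{a, twin v} \<in> E"
    using edge_iff_adj adj_def by auto
  have same_card: "card (face_of_colour c {x, y}) = card (face_of_colour c' {x', y'})"
    if "{x, y} \<in> E" "{x', y'} \<in> E" for c c' x y x' y'
    using same face_of_colour that by blast
  have walk: "face_walk c' (twin_if x a) (twin_if y v) n
      = twin_if (twist_seq twist (c \<noteq> c') x y n) (face_walk c a v n)" for c c' x y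
    using face_walk_twin_if[OF V(1,2)] up(1) adj_def by blast
  have walk_other_colour: "face_walk False a v n
      = twin_if (twist_seq twist True False False n) (face_walk True a v n)"
    using walk[where c = True and c' = False and x = False and y = False]
    by (simp add: twin_if_simps)
  have walk_twin_source: "face_walk True (twin a) v n
      = twin_if (twist_seq twist False True False n) (face_walk True a v n)"
    using walk[where c = True and c' = True and x = True and y = False]
    by (simp add: twin_if_simps)
  have walk_twin_target: "face_walk True a (twin v) n
      = twin_if (twist_seq twist False False True n) (face_walk True a v n)"
    using walk[where c = True and c' = True and x = False and y = True]
    by (simp add: twin_if_simps)
  show "\<not> twist_seq twist True False False n"
    using card_faces_differ[where d' = False, OF V(1,2) up(1) V(1,2) up(1) walk_other_colour]
      same_card[OF E(1) E(1)] by (auto simp: twin_if_simps)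
  show "twist_seq twist False True False n"
    using card_faces_differ[where d' = True, OF V(1,2) up(1) V(3,2) up(2) walk_twin_source]
      same_card[OF E(1) E(2)] by (auto simp: twin_if_simps)
  show "\<not> twist_seq twist False False True n"
    using card_faces_differ[where d' = False, OF V(1,2) up(1) V(1,4) up(3) walk_twin_target]
      same_card[OF E(1) E(3)] by (auto simp: twin_if_simps)
qed

lemma face_lengths_differ_without_twin_corners: "\<exists>f\<in>F. \<exists>g\<in>F. card f \<noteq> card g"
  using twist_seq_dvd[OF twist_seq_n_if_same_lengths] not_twist_period_dvd by blast

end

context rose_window_map
begin

lemma face_lengths_differ: "\<exists>f\<in>F. \<exists>g\<in>F. card f \<noteq> card g"
proof (cases "\<exists>f v a. f \<in> F \<and> {v, a} \<in> f \<and> {v, twin a} \<in> f")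
  case True
  then obtain f v a where f: "f \<in> F" "{v, a} \<in> f" "{v, twin a} \<in> f" by blast
  then have "{v, a} \<in> E" using face_subset_E by blast
  then obtain g where "g \<in> F" "g \<noteq> f" "{v, a} \<in> g"
    using faces_at_edge by metis
  then show ?thesis using twin_corner_face(2)[OF f] twin_corner_other_face[OF f] f(1) by metis
next
  case False
  interpret rose_window_map_without_twin_corners n F
    by unfold_locales (use False in blast)
  show ?thesis by (rule face_lengths_differ_without_twin_corners)
qed

end

theorem lemma3p2:
  fixes n :: nat and F :: "(bool \<times> nat) set set set"
  assumes "n \<ge> 3" and "n \<noteq> 4"
    and "polytopal_map (rose_V n) (rose_E n 2 1) F"
    and "class_2_01 (rose_V n) (rose_E n 2 1) F"
  shows "card ((\<lambda>f. card f) ` F) = 2"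
proof -
  interpret rose_window_map n F using assms by unfold_locales
  show ?thesis using face_lengths_differ card_face_lengths by blast
qed

end
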